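(* Let $\mathcal{C}$ be a Frobenius category and $f:M\to N$ a morphism in $\mathcal{C}$. Then: (1) $f$ is a $0$-Ext-phantom morphism if and only if $f$ factors through a projective object of $\mathcal{C}$; (2) $f$ is a $0$-Ext-invertible morphism if and only if there exist projective objects $P,Q$ of $\mathcal{C}$ and morphisms $g_1:Q\to N$, $l:M\to P$, $g_2:Q\to P$ such that the morphism $M\oplus Q\to N\oplus P$ given by the matrix $\begin{pmatrix} f & g_1\\ l & g_2\end{pmatrix}$ is an isomorphism in $\mathcal{C}$.
   Context: Let $\mathcal{A}$ be an abelian category and $\mathcal{C}$ an extension-closed full additive subcategory of $\mathcal{A}$, viewed as an exact category whose conflations are the short exact sequences of $\mathcal{A}$ with all terms in $\mathcal{C}$; $\operatorname{Ext}^i_{\mathcal{C}}$ is Yoneda Ext in $\mathcal{C}$. $\mathcal{C}$ is a Frobenius category if it has enough projectives and enough injectives and the projective objects coincide with the injective objects. A morphism $f:M\to N$ is $0$-Ext-phantom if the natural transformation $\operatorname{Ext}^1_{\mathcal{C}}(-,f):\operatorname{Ext}^1_{\mathcal{C}}(-,M)\to\operatorname{Ext}^1_{\mathcal{C}}(-,N)$ is zero, and $0$-Ext-invertible if it is a natural isomorphism. *)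

theory Defs
  imports Main
begin

text \<open>A (preadditive) category given by its object set, hom-sets,
composition (cmp g f = g after f), identities, and the abelian group
structure on hom-sets (addition, negation, zero morphisms).\<close>

record ('o, 'm) cat =
  Ob  :: "'o set"
  Hom :: "'o \<Rightarrow> 'o \<Rightarrow> 'm set"
  cmp :: "'m \<Rightarrow> 'm \<Rightarrow> 'm"
  idm :: "'o \<Rightarrow> 'm"
  add :: "'m \<Rightarrow> 'm \<Rightarrow> 'm"
  neg :: "'m \<Rightarrow> 'm"
  zr  :: "'o \<Rightarrow> 'o \<Rightarrow> 'm"

definition category :: "('o, 'm) cat \<Rightarrow> bool" where
  "category A \<longleftrightarrow>
     (\<forall>X\<in>Ob A. idm A X \<in> Hom A X X) \<and>
     (\<forall>X\<in>Ob A. \<forall>Y\<in>Ob A. \<forall>Z\<in>Ob A. \<forall>f\<in>Hom A X Y. \<forall>g\<in>Hom A Y Z.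
        cmp A g f \<in> Hom A X Z) \<and>
     (\<forall>X\<in>Ob A. \<forall>Y\<in>Ob A. \<forall>f\<in>Hom A X Y.
        cmp A (idm A Y) f = f \<and> cmp A f (idm A X) = f) \<and>
     (\<forall>W\<in>Ob A. \<forall>X\<in>Ob A. \<forall>Y\<in>Ob A. \<forall>Z\<in>Ob A.
        \<forall>f\<in>Hom A W X. \<forall>g\<in>Hom A X Y. \<forall>h\<in>Hom A Y Z.
        cmp A h (cmp A g f) = cmp A (cmp A h g) f)"

definition preadditive :: "('o, 'm) cat \<Rightarrow> bool" where
  "preadditive A \<longleftrightarrow> category A \<and>
     (\<forall>X\<in>Ob A. \<forall>Y\<in>Ob A.
        zr A X Y \<in> Hom A X Y \<and>
        (\<forall>f\<in>Hom A X Y. \<forall>g\<in>Hom A X Y. add A f g \<in> Hom A X Y) \<and>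
        (\<forall>f\<in>Hom A X Y. neg A f \<in> Hom A X Y) \<and>
        (\<forall>f\<in>Hom A X Y. \<forall>g\<in>Hom A X Y. \<forall>h\<in>Hom A X Y.
           add A (add A f g) h = add A f (add A g h)) \<and>
        (\<forall>f\<in>Hom A X Y. \<forall>g\<in>Hom A X Y. add A f g = add A g f) \<and>
        (\<forall>f\<in>Hom A X Y. add A f (zr A X Y) = f) \<and>
        (\<forall>f\<in>Hom A X Y. add A f (neg A f) = zr A X Y)) \<and>
     (\<forall>X\<in>Ob A. \<forall>Y\<in>Ob A. \<forall>Z\<in>Ob A.
        (\<forall>f\<in>Hom A X Y. \<forall>g\<in>Hom A Y Z. \<forall>g'\<in>Hom A Y Z.
           cmp A (add A g g') f = add A (cmp A g f) (cmp A g' f)) \<and>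
        (\<forall>f\<in>Hom A X Y. \<forall>f'\<in>Hom A X Y. \<forall>g\<in>Hom A Y Z.
           cmp A g (add A f f') = add A (cmp A g f) (cmp A g f')))"

definition is_zero_obj :: "('o, 'm) cat \<Rightarrow> 'o \<Rightarrow> bool" where
  "is_zero_obj A Z \<longleftrightarrow> Z \<in> Ob A \<and>
     (\<forall>X\<in>Ob A. (\<exists>!f. f \<in> Hom A Z X) \<and> (\<exists>!f. f \<in> Hom A X Z))"

definition is_biproduct ::
  "('o, 'm) cat \<Rightarrow> 'o \<Rightarrow> 'o \<Rightarrow> 'o \<Rightarrow> 'm \<Rightarrow> 'm \<Rightarrow> 'm \<Rightarrow> 'm \<Rightarrow> bool" where
  "is_biproduct A X Y S i1 i2 p1 p2 \<longleftrightarrow>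
     X \<in> Ob A \<and> Y \<in> Ob A \<and> S \<in> Ob A \<and>
     i1 \<in> Hom A X S \<and> i2 \<in> Hom A Y S \<and> p1 \<in> Hom A S X \<and> p2 \<in> Hom A S Y \<and>
     cmp A p1 i1 = idm A X \<and> cmp A p2 i2 = idm A Y \<and>
     cmp A p1 i2 = zr A Y X \<and> cmp A p2 i1 = zr A X Y \<and>
     add A (cmp A i1 p1) (cmp A i2 p2) = idm A S"

definition is_mono :: "('o, 'm) cat \<Rightarrow> 'o \<Rightarrow> 'o \<Rightarrow> 'm \<Rightarrow> bool" where
  "is_mono A X Y f \<longleftrightarrow> f \<in> Hom A X Y \<and>
     (\<forall>Z\<in>Ob A. \<forall>g\<in>Hom A Z X. \<forall>h\<in>Hom A Z X. cmp A f g = cmp A f h \<longrightarrow> g = h)"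

definition is_epi :: "('o, 'm) cat \<Rightarrow> 'o \<Rightarrow> 'o \<Rightarrow> 'm \<Rightarrow> bool" where
  "is_epi A X Y f \<longleftrightarrow> f \<in> Hom A X Y \<and>
     (\<forall>Z\<in>Ob A. \<forall>g\<in>Hom A Y Z. \<forall>h\<in>Hom A Y Z. cmp A g f = cmp A h f \<longrightarrow> g = h)"

definition is_kernel :: "('o, 'm) cat \<Rightarrow> 'o \<Rightarrow> 'o \<Rightarrow> 'o \<Rightarrow> 'm \<Rightarrow> 'm \<Rightarrow> bool" where
  "is_kernel A K X Y k f \<longleftrightarrow>
     K \<in> Ob A \<and> X \<in> Ob A \<and> Y \<in> Ob A \<and> k \<in> Hom A K X \<and> f \<in> Hom A X Y \<and>
     cmp A f k = zr A K Y \<and>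
     (\<forall>Z\<in>Ob A. \<forall>g\<in>Hom A Z X. cmp A f g = zr A Z Y \<longrightarrow>
        (\<exists>!h. h \<in> Hom A Z K \<and> cmp A k h = g))"

definition is_cokernel :: "('o, 'm) cat \<Rightarrow> 'o \<Rightarrow> 'o \<Rightarrow> 'o \<Rightarrow> 'm \<Rightarrow> 'm \<Rightarrow> bool" where
  "is_cokernel A X Y Q f q \<longleftrightarrow>
     X \<in> Ob A \<and> Y \<in> Ob A \<and> Q \<in> Ob A \<and> f \<in> Hom A X Y \<and> q \<in> Hom A Y Q \<and>
     cmp A q f = zr A X Q \<and>
     (\<forall>Z\<in>Ob A. \<forall>g\<in>Hom A Y Z. cmp A g f = zr A X Z \<longrightarrow>
        (\<exists>!h. h \<in> Hom A Q Z \<and> cmp A h q = g))"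

definition abelian :: "('o, 'm) cat \<Rightarrow> bool" where
  "abelian A \<longleftrightarrow> preadditive A \<and>
     (\<exists>Z. is_zero_obj A Z) \<and>
     (\<forall>X\<in>Ob A. \<forall>Y\<in>Ob A. \<exists>S i1 i2 p1 p2. is_biproduct A X Y S i1 i2 p1 p2) \<and>
     (\<forall>X\<in>Ob A. \<forall>Y\<in>Ob A. \<forall>f\<in>Hom A X Y.
        (\<exists>K k. is_kernel A K X Y k f) \<and> (\<exists>Q q. is_cokernel A X Y Q f q)) \<and>
     (\<forall>X\<in>Ob A. \<forall>Y\<in>Ob A. \<forall>f. is_mono A X Y f \<longrightarrow>
        (\<exists>Z g. is_kernel A X Y Z f g)) \<and>
     (\<forall>X\<in>Ob A. \<forall>Y\<in>Ob A. \<forall>f. is_epi A X Y f \<longrightarrow>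
        (\<exists>Z g. is_cokernel A Z X Y g f))"

definition is_iso :: "('o, 'm) cat \<Rightarrow> 'o \<Rightarrow> 'o \<Rightarrow> 'm \<Rightarrow> bool" where
  "is_iso A X Y f \<longleftrightarrow> f \<in> Hom A X Y \<and>
     (\<exists>g\<in>Hom A Y X. cmp A g f = idm A X \<and> cmp A f g = idm A Y)"

definition short_exact :: "('o, 'm) cat \<Rightarrow> 'o \<Rightarrow> 'o \<Rightarrow> 'o \<Rightarrow> 'm \<Rightarrow> 'm \<Rightarrow> bool" where
  "short_exact A X E Y i p \<longleftrightarrow> is_kernel A X E Y i p \<and> is_cokernel A X E Y i p"

text \<open>C is an extension-closed full additive subcategory of A (given by its
object set; fullness: the hom-sets are those of A).  Containing a zero object
together with extension-closedness gives closure under isomorphisms and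
finite direct sums.\<close>
definition ext_closed_additive :: "('o, 'm) cat \<Rightarrow> 'o set \<Rightarrow> bool" where
  "ext_closed_additive A C \<longleftrightarrow> C \<subseteq> Ob A \<and>
     (\<exists>Z\<in>C. is_zero_obj A Z) \<and>
     (\<forall>X E Y i p. short_exact A X E Y i p \<and> X \<in> C \<and> Y \<in> C \<longrightarrow> E \<in> C)"

definition conflation :: "('o, 'm) cat \<Rightarrow> 'o set \<Rightarrow> 'o \<Rightarrow> 'o \<Rightarrow> 'o \<Rightarrow> 'm \<Rightarrow> 'm \<Rightarrow> bool" where
  "conflation A C X E Y i p \<longleftrightarrow> short_exact A X E Y i p \<and> X \<in> C \<and> E \<in> C \<and> Y \<in> C"

definition proj_obj :: "('o, 'm) cat \<Rightarrow> 'o set \<Rightarrow> 'o \<Rightarrow> bool" where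
  "proj_obj A C P \<longleftrightarrow> P \<in> C \<and>
     (\<forall>X E Y i p g. conflation A C X E Y i p \<and> g \<in> Hom A P Y \<longrightarrow>
        (\<exists>h\<in>Hom A P E. cmp A p h = g))"

definition inj_obj :: "('o, 'm) cat \<Rightarrow> 'o set \<Rightarrow> 'o \<Rightarrow> bool" where
  "inj_obj A C I \<longleftrightarrow> I \<in> C \<and>
     (\<forall>X E Y i p g. conflation A C X E Y i p \<and> g \<in> Hom A X I \<longrightarrow>
        (\<exists>h\<in>Hom A E I. cmp A h i = g))"

definition frobenius :: "('o, 'm) cat \<Rightarrow> 'o set \<Rightarrow> bool" where
  "frobenius A C \<longleftrightarrow>
     (\<forall>X\<in>C. \<exists>K P i p. conflation A C K P X i p \<and> proj_obj A C P) \<and>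
     (\<forall>X\<in>C. \<exists>I Y i p. conflation A C X I Y i p \<and> inj_obj A C I) \<and>
     (\<forall>P. proj_obj A C P \<longleftrightarrow> inj_obj A C P)"

definition yoneda_equiv ::
  "('o, 'm) cat \<Rightarrow> 'o \<Rightarrow> 'o \<Rightarrow> 'm \<Rightarrow> 'm \<Rightarrow> 'o \<Rightarrow> 'm \<Rightarrow> 'm \<Rightarrow> bool" where
  "yoneda_equiv A E Y i p E' i' p' \<longleftrightarrow>
     (\<exists>\<phi>\<in>Hom A E E'. cmp A \<phi> i = i' \<and> cmp A p' \<phi> = p)"

text \<open>The class of the conflation N \<rightarrow> E' \<rightarrow> X is the image of the class of
M \<rightarrow> E \<rightarrow> X under Ext^1(X,f) (i.e. is the pushout f_* of it) iff there is a
morphism of conflations (f, \<phi>, id_X) from the first to the second.\<close>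
definition ext_push ::
  "('o, 'm) cat \<Rightarrow> 'm \<Rightarrow> 'o \<Rightarrow> 'm \<Rightarrow> 'm \<Rightarrow> 'o \<Rightarrow> 'm \<Rightarrow> 'm \<Rightarrow> bool" where
  "ext_push A f E i p E' i' p' \<longleftrightarrow>
     (\<exists>\<phi>\<in>Hom A E E'. cmp A \<phi> i = cmp A i' f \<and> cmp A p' \<phi> = p)"

text \<open>The zero element of Ext^1(X,N) is the class of split conflations.\<close>
definition split_conf :: "('o, 'm) cat \<Rightarrow> 'o \<Rightarrow> 'o \<Rightarrow> 'm \<Rightarrow> bool" where
  "split_conf A E X p \<longleftrightarrow> (\<exists>s\<in>Hom A X E. cmp A p s = idm A X)"

text \<open>Ext^1_C(-,f) is zero: every component sends every class to zero.\<close>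
definition ext_phantom0 :: "('o, 'm) cat \<Rightarrow> 'o set \<Rightarrow> 'o \<Rightarrow> 'o \<Rightarrow> 'm \<Rightarrow> bool" where
  "ext_phantom0 A C M N f \<longleftrightarrow>
     (\<forall>X\<in>C. \<forall>E i p E' i' p'.
        conflation A C M E X i p \<and> conflation A C N E' X i' p' \<and>
        ext_push A f E i p E' i' p' \<longrightarrow> split_conf A E' X p')"

text \<open>Ext^1_C(-,f) is a natural isomorphism: every component
Ext^1_C(X,M) \<rightarrow> Ext^1_C(X,N) is bijective (on Yoneda classes).\<close>
definition ext_invertible0 :: "('o, 'm) cat \<Rightarrow> 'o set \<Rightarrow> 'o \<Rightarrow> 'o \<Rightarrow> 'm \<Rightarrow> bool" where
  "ext_invertible0 A C M N f \<longleftrightarrow>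
     (\<forall>X\<in>C.
        (\<forall>E' i' p'. conflation A C N E' X i' p' \<longrightarrow>
           (\<exists>E i p. conflation A C M E X i p \<and> ext_push A f E i p E' i' p')) \<and>
        (\<forall>E1 i1 p1 E2 i2 p2 F1 j1 q1 F2 j2 q2.
           conflation A C M E1 X i1 p1 \<and> conflation A C M E2 X i2 p2 \<and>
           conflation A C N F1 X j1 q1 \<and> conflation A C N F2 X j2 q2 \<and>
           ext_push A f E1 i1 p1 F1 j1 q1 \<and> ext_push A f E2 i2 p2 F2 j2 q2 \<and>
           yoneda_equiv A F1 X j1 q1 F2 j2 q2 \<longrightarrow>
           yoneda_equiv A E1 X i1 p1 E2 i2 p2))"

definition factors_through_proj :: "('o, 'm) cat \<Rightarrow> 'o set \<Rightarrow> 'o \<Rightarrow> 'o \<Rightarrow> 'm \<Rightarrow> bool" where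
  "factors_through_proj A C M N f \<longleftrightarrow>
     (\<exists>P a b. proj_obj A C P \<and> a \<in> Hom A M P \<and> b \<in> Hom A P N \<and> f = cmp A b a)"

end

theory Submission
  imports Defs
begin

(*
  Morphisms of conflations (c, phi, id) from M -> E -> X to N -> F -> X describe the action of
  c : M -> N on Ext^1(X, -).  Given one over c, there is one over c' between the same
  conflations exactly when c' - c factors through the inflation M -> E, and a conflation splits
  iff it receives a morphism over 0.  As injectives are projective, a map factoring through a
  projective extends along every inflation, so it acts as 0; conversely, if f is 0-Ext-phantom
  then the pushout of an injective hull M -> J along f splits, and f factors through J.

  An invertible matrix [f g1; l g2] gives g : N -> M with 1 - f g and 1 - g f factoring through
  projectives, which makes Ext^1(-, f) bijective.  Conversely, let M -> E -> Z be a preimage of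
  an injective hull N -> J -> Z under Ext^1(Z, f).  Lifting along the projective J yields g with
  1 - f g factoring through J, injectivity of Ext^1(-, f) turns g into a stable inverse of f,
  and this forces E to be projective.  Finally M -> N (+) E -> J is left exact and split since J
  is projective, so M (+) J is isomorphic to N (+) E through the matrix [f s; -i theta].
*)

section \<open>Preadditive categories\<close>

locale preadditive_category =
  fixes A :: "('o, 'm) cat"
  assumes preadditive: "preadditive A"
begin

abbreviation compose (infixr "\<cdot>" 75) where "g \<cdot> f \<equiv> cmp A g f"
abbreviation hom_plus (infixl "\<oplus>" 65) where "f \<oplus> g \<equiv> add A f g"
abbreviation hom_minus (infixl "\<ominus>" 65) where "f \<ominus> g \<equiv> add A f (neg A g)"

lemma category: "category A"
  using preadditive unfolding preadditive_def by blast

lemma comp_closed [intro, simp]: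
  "f \<in> Hom A X Y \<Longrightarrow> g \<in> Hom A Y Z \<Longrightarrow> X \<in> Ob A \<Longrightarrow> Y \<in> Ob A \<Longrightarrow> Z \<in> Ob A \<Longrightarrow>
   g \<cdot> f \<in> Hom A X Z"
  using category unfolding category_def by blast

lemma idm_closed [intro, simp]: "X \<in> Ob A \<Longrightarrow> idm A X \<in> Hom A X X"
  using category unfolding category_def by blast

lemma comp_idm_left [simp]: "f \<in> Hom A X Y \<Longrightarrow> X \<in> Ob A \<Longrightarrow> Y \<in> Ob A \<Longrightarrow> idm A Y \<cdot> f = f"
  using category unfolding category_def by blast

lemma comp_idm_right [simp]: "f \<in> Hom A X Y \<Longrightarrow> X \<in> Ob A \<Longrightarrow> Y \<in> Ob A \<Longrightarrow> f \<cdot> idm A X = f"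
  using category unfolding category_def by blast

lemma comp_assoc:
  "f \<in> Hom A W X \<Longrightarrow> g \<in> Hom A X Y \<Longrightarrow> h \<in> Hom A Y Z \<Longrightarrow>
   W \<in> Ob A \<Longrightarrow> X \<in> Ob A \<Longrightarrow> Y \<in> Ob A \<Longrightarrow> Z \<in> Ob A \<Longrightarrow> (h \<cdot> g) \<cdot> f = h \<cdot> (g \<cdot> f)"
  using category unfolding category_def by (simp add: Ball_def)

lemma zr_closed [intro, simp]: "X \<in> Ob A \<Longrightarrow> Y \<in> Ob A \<Longrightarrow> zr A X Y \<in> Hom A X Y"
  using preadditive unfolding preadditive_def by blast

lemma add_closed [intro, simp]:
  "f \<in> Hom A X Y \<Longrightarrow> g \<in> Hom A X Y \<Longrightarrow> X \<in> Ob A \<Longrightarrow> Y \<in> Ob A \<Longrightarrow> f \<oplus> g \<in> Hom A X Y"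
  using preadditive unfolding preadditive_def by blast

lemma neg_closed [intro, simp]:
  "f \<in> Hom A X Y \<Longrightarrow> X \<in> Ob A \<Longrightarrow> Y \<in> Ob A \<Longrightarrow> neg A f \<in> Hom A X Y"
  using preadditive unfolding preadditive_def by blast

lemma add_assoc:
  "f \<in> Hom A X Y \<Longrightarrow> g \<in> Hom A X Y \<Longrightarrow> h \<in> Hom A X Y \<Longrightarrow> X \<in> Ob A \<Longrightarrow> Y \<in> Ob A \<Longrightarrow>
   f \<oplus> g \<oplus> h = f \<oplus> (g \<oplus> h)"
  using preadditive unfolding preadditive_def by blast

lemma add_commute:
  "f \<in> Hom A X Y \<Longrightarrow> g \<in> Hom A X Y \<Longrightarrow> X \<in> Ob A \<Longrightarrow> Y \<in> Ob A \<Longrightarrow> f \<oplus> g = g \<oplus> f"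
  using preadditive unfolding preadditive_def by blast

lemma add_zr_right [simp]: "f \<in> Hom A X Y \<Longrightarrow> X \<in> Ob A \<Longrightarrow> Y \<in> Ob A \<Longrightarrow> f \<oplus> zr A X Y = f"
  using preadditive unfolding preadditive_def by blast

lemma add_neg_right [simp]: "f \<in> Hom A X Y \<Longrightarrow> X \<in> Ob A \<Longrightarrow> Y \<in> Ob A \<Longrightarrow> f \<ominus> f = zr A X Y"
  using preadditive unfolding preadditive_def by blast

lemma comp_add_left:
  "f \<in> Hom A X Y \<Longrightarrow> g \<in> Hom A Y Z \<Longrightarrow> g' \<in> Hom A Y Z \<Longrightarrow> X \<in> Ob A \<Longrightarrow> Y \<in> Ob A \<Longrightarrow> Z \<in> Ob A \<Longrightarrow>
   (g \<oplus> g') \<cdot> f = g \<cdot> f \<oplus> g' \<cdot> f"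
  using preadditive unfolding preadditive_def by (simp add: Ball_def)

lemma comp_add_right:
  "f \<in> Hom A X Y \<Longrightarrow> f' \<in> Hom A X Y \<Longrightarrow> g \<in> Hom A Y Z \<Longrightarrow> X \<in> Ob A \<Longrightarrow> Y \<in> Ob A \<Longrightarrow> Z \<in> Ob A \<Longrightarrow>
   g \<cdot> (f \<oplus> f') = g \<cdot> f \<oplus> g \<cdot> f'"
  using preadditive unfolding preadditive_def by (simp add: Ball_def)

lemma add_zr_left [simp]: "f \<in> Hom A X Y \<Longrightarrow> X \<in> Ob A \<Longrightarrow> Y \<in> Ob A \<Longrightarrow> zr A X Y \<oplus> f = f"
  using add_commute[of "zr A X Y" X Y f] by simp

lemma add_neg_left [simp]: "f \<in> Hom A X Y \<Longrightarrow> X \<in> Ob A \<Longrightarrow> Y \<in> Ob A \<Longrightarrow> neg A f \<oplus> f = zr A X Y"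
  using add_commute[of "neg A f" X Y f] by simp

lemma add_left_cancel:
  assumes "f \<in> Hom A X Y" "g \<in> Hom A X Y" "h \<in> Hom A X Y" "X \<in> Ob A" "Y \<in> Ob A"
    and "f \<oplus> g = f \<oplus> h"
  shows "g = h"
proof -
  have "g = (neg A f \<oplus> f) \<oplus> g" using assms by simp
  also have "\<dots> = neg A f \<oplus> (f \<oplus> h)" using assms add_assoc[of "neg A f" X Y f g] by simp
  also have "\<dots> = h" using assms add_assoc[of "neg A f" X Y f h] by simp
  finally show ?thesis .
qed

lemma neg_unique:
  "f \<in> Hom A X Y \<Longrightarrow> g \<in> Hom A X Y \<Longrightarrow> X \<in> Ob A \<Longrightarrow> Y \<in> Ob A \<Longrightarrow> f \<oplus> g = zr A X Y \<Longrightarrow>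
   g = neg A f"
  using add_left_cancel[of f X Y g "neg A f"] by simp

lemma neg_neg [simp]: "f \<in> Hom A X Y \<Longrightarrow> X \<in> Ob A \<Longrightarrow> Y \<in> Ob A \<Longrightarrow> neg A (neg A f) = f"
  using neg_unique[of "neg A f" X Y f] by simp

lemma neg_zr [simp]: "X \<in> Ob A \<Longrightarrow> Y \<in> Ob A \<Longrightarrow> neg A (zr A X Y) = zr A X Y"
  using neg_unique[of "zr A X Y" X Y "zr A X Y"] by simp

lemma add_sub_cancel [simp]:
  "f \<in> Hom A X Y \<Longrightarrow> g \<in> Hom A X Y \<Longrightarrow> X \<in> Ob A \<Longrightarrow> Y \<in> Ob A \<Longrightarrow> f \<ominus> g \<oplus> g = f"
  using add_assoc[of f X Y "neg A g" g] by simp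

lemma add_eq_imp_eq_sub:
  "f \<in> Hom A X Y \<Longrightarrow> g \<in> Hom A X Y \<Longrightarrow> X \<in> Ob A \<Longrightarrow> Y \<in> Ob A \<Longrightarrow> f \<oplus> g = h \<Longrightarrow> f = h \<ominus> g"
  using add_assoc[of f X Y g "neg A g"] by force

lemma sub_eq_zr_iff:
  "f \<in> Hom A X Y \<Longrightarrow> g \<in> Hom A X Y \<Longrightarrow> X \<in> Ob A \<Longrightarrow> Y \<in> Ob A \<Longrightarrow> f \<ominus> g = zr A X Y \<longleftrightarrow> f = g"
  by (metis add_sub_cancel add_zr_left neg_closed add_neg_right)

lemma comp_zr_left [simp]:
  assumes "f \<in> Hom A X Y" "X \<in> Ob A" "Y \<in> Ob A" "Z \<in> Ob A"
  shows "zr A Y Z \<cdot> f = zr A X Z"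
proof -
  have zf: "zr A Y Z \<cdot> f \<in> Hom A X Z" using assms by blast
  have "zr A Y Z \<cdot> f \<oplus> zr A Y Z \<cdot> f = zr A Y Z \<cdot> f \<oplus> zr A X Z"
    using assms zf comp_add_left[of f X Y "zr A Y Z" Z "zr A Y Z"] by simp
  then show ?thesis using add_left_cancel[OF zf zf] assms by simp
qed

lemma comp_zr_right [simp]:
  assumes "g \<in> Hom A Y Z" "X \<in> Ob A" "Y \<in> Ob A" "Z \<in> Ob A"
  shows "g \<cdot> zr A X Y = zr A X Z"
proof -
  have gz: "g \<cdot> zr A X Y \<in> Hom A X Z" using assms by blast
  have "g \<cdot> zr A X Y \<oplus> g \<cdot> zr A X Y = g \<cdot> zr A X Y \<oplus> zr A X Z"
    using assms gz comp_add_right[of "zr A X Y" X Y "zr A X Y" g Z] by simp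
  then show ?thesis using add_left_cancel[OF gz gz] assms by simp
qed

lemma comp_neg_left [simp]:
  assumes "f \<in> Hom A X Y" "g \<in> Hom A Y Z" "X \<in> Ob A" "Y \<in> Ob A" "Z \<in> Ob A"
  shows "neg A g \<cdot> f = neg A (g \<cdot> f)"
proof (rule neg_unique)
  show "g \<cdot> f \<oplus> neg A g \<cdot> f = zr A X Z"
    using assms comp_add_left[of f X Y g Z "neg A g"] by simp
qed (use assms in blast)+

lemma comp_neg_right [simp]:
  assumes "f \<in> Hom A X Y" "g \<in> Hom A Y Z" "X \<in> Ob A" "Y \<in> Ob A" "Z \<in> Ob A"
  shows "g \<cdot> neg A f = neg A (g \<cdot> f)"
proof (rule neg_unique)
  show "g \<cdot> f \<oplus> g \<cdot> neg A f = zr A X Z"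
    using assms comp_add_right[of f X Y "neg A f" g Z] by simp
qed (use assms in blast)+

lemma comp_sub_left:
  "f \<in> Hom A X Y \<Longrightarrow> g \<in> Hom A Y Z \<Longrightarrow> g' \<in> Hom A Y Z \<Longrightarrow> X \<in> Ob A \<Longrightarrow> Y \<in> Ob A \<Longrightarrow> Z \<in> Ob A \<Longrightarrow>
   (g \<ominus> g') \<cdot> f = g \<cdot> f \<ominus> g' \<cdot> f"
  by (simp add: comp_add_left)

lemma comp_sub_right:
  "f \<in> Hom A X Y \<Longrightarrow> f' \<in> Hom A X Y \<Longrightarrow> g \<in> Hom A Y Z \<Longrightarrow> X \<in> Ob A \<Longrightarrow> Y \<in> Ob A \<Longrightarrow> Z \<in> Ob A \<Longrightarrow>
   g \<cdot> (f \<ominus> f') = g \<cdot> f \<ominus> g \<cdot> f'"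
  by (simp add: comp_add_right)


subsection \<open>Kernels, cokernels and biproducts\<close>

lemma mono_cancel:
  "is_mono A X Y f \<Longrightarrow> g \<in> Hom A W X \<Longrightarrow> h \<in> Hom A W X \<Longrightarrow> W \<in> Ob A \<Longrightarrow> f \<cdot> g = f \<cdot> h \<Longrightarrow> g = h"
  unfolding is_mono_def by blast

lemma epi_cancel:
  "is_epi A X Y f \<Longrightarrow> g \<in> Hom A Y W \<Longrightarrow> h \<in> Hom A Y W \<Longrightarrow> W \<in> Ob A \<Longrightarrow> g \<cdot> f = h \<cdot> f \<Longrightarrow> g = h"
  unfolding is_epi_def by blast

lemma kernelD:
  assumes "is_kernel A K X Y k f"
  shows "K \<in> Ob A" "X \<in> Ob A" "Y \<in> Ob A" "k \<in> Hom A K X" "f \<in> Hom A X Y" "f \<cdot> k = zr A K Y"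
  using assms unfolding is_kernel_def by auto

lemma kernel_factor:
  assumes "is_kernel A K X Y k f" "g \<in> Hom A W X" "W \<in> Ob A" "f \<cdot> g = zr A W Y"
  shows "\<exists>h\<in>Hom A W K. k \<cdot> h = g"
  using assms unfolding is_kernel_def by blast

lemma kernel_cancel:
  assumes k: "is_kernel A K X Y k f" and "a \<in> Hom A W K" "b \<in> Hom A W K" "W \<in> Ob A"
    and "k \<cdot> a = k \<cdot> b"
  shows "a = b"
proof -
  note K = kernelD[OF k]
  have "f \<cdot> (k \<cdot> a) = zr A W Y"
    using K assms comp_assoc[of a W K k X f Y, symmetric] by simp
  moreover have "k \<cdot> a \<in> Hom A W X" using K assms by blast
  moreover have "\<forall>Z\<in>Ob A. \<forall>g\<in>Hom A Z X. f \<cdot> g = zr A Z Y \<longrightarrow> (\<exists>!h. h \<in> Hom A Z K \<and> k \<cdot> h = g)"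
    using k unfolding is_kernel_def by (elim conjE)
  ultimately have "\<exists>!h. h \<in> Hom A W K \<and> k \<cdot> h = k \<cdot> a"
    using \<open>W \<in> Ob A\<close> by blast
  then show ?thesis using assms by metis
qed

lemma kernelI:
  assumes k: "is_mono A K X k" and f: "f \<in> Hom A X Y" and Ob: "K \<in> Ob A" "X \<in> Ob A" "Y \<in> Ob A"
    and fk: "f \<cdot> k = zr A K Y"
    and factor: "\<And>W g. W \<in> Ob A \<Longrightarrow> g \<in> Hom A W X \<Longrightarrow> f \<cdot> g = zr A W Y \<Longrightarrow> \<exists>h\<in>Hom A W K. k \<cdot> h = g"
  shows "is_kernel A K X Y k f"
  unfolding is_kernel_def
proof (intro conjI ballI impI)
  show "k \<in> Hom A K X" using k unfolding is_mono_def by blast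
  fix W g assume "W \<in> Ob A" "g \<in> Hom A W X" "f \<cdot> g = zr A W Y"
  then show "\<exists>!h. h \<in> Hom A W K \<and> k \<cdot> h = g" using factor mono_cancel[OF k] by metis
qed (use assms in auto)

lemma kernel_is_mono:
  assumes k: "is_kernel A K X Y k f"
  shows "is_mono A K X k"
  unfolding is_mono_def
proof (intro conjI ballI impI)
  show "k \<in> Hom A K X" using kernelD[OF k] by blast
qed (rule kernel_cancel[OF k])

lemma cokernelD:
  assumes "is_cokernel A X Y Q f q"
  shows "X \<in> Ob A" "Y \<in> Ob A" "Q \<in> Ob A" "f \<in> Hom A X Y" "q \<in> Hom A Y Q" "q \<cdot> f = zr A X Q"
  using assms unfolding is_cokernel_def by auto

lemma cokernel_factor:
  assumes "is_cokernel A X Y Q f q" "g \<in> Hom A Y W" "W \<in> Ob A" "g \<cdot> f = zr A X W"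
  shows "\<exists>h\<in>Hom A Q W. h \<cdot> q = g"
  using assms unfolding is_cokernel_def by blast

lemma cokernel_cancel:
  assumes q: "is_cokernel A X Y Q f q" and "a \<in> Hom A Q W" "b \<in> Hom A Q W" "W \<in> Ob A"
    and "a \<cdot> q = b \<cdot> q"
  shows "a = b"
proof -
  note Q = cokernelD[OF q]
  have "(a \<cdot> q) \<cdot> f = zr A X W"
    using Q assms comp_assoc[of f X Y q Q a W] by simp
  moreover have "a \<cdot> q \<in> Hom A Y W" using Q assms by blast
  moreover have "\<forall>Z\<in>Ob A. \<forall>g\<in>Hom A Y Z. g \<cdot> f = zr A X Z \<longrightarrow> (\<exists>!h. h \<in> Hom A Q Z \<and> h \<cdot> q = g)"
    using q unfolding is_cokernel_def by (elim conjE)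
  ultimately have "\<exists>!h. h \<in> Hom A Q W \<and> h \<cdot> q = a \<cdot> q"
    using \<open>W \<in> Ob A\<close> by blast
  then show ?thesis using assms by metis
qed

lemma monoI:
  assumes f: "f \<in> Hom A X Y" "X \<in> Ob A" "Y \<in> Ob A"
    and zr: "\<And>W z. W \<in> Ob A \<Longrightarrow> z \<in> Hom A W X \<Longrightarrow> f \<cdot> z = zr A W Y \<Longrightarrow> z = zr A W X"
  shows "is_mono A X Y f"
  unfolding is_mono_def
proof (intro conjI ballI impI)
  fix W g h assume W: "W \<in> Ob A" and gh: "g \<in> Hom A W X" "h \<in> Hom A W X" and "f \<cdot> g = f \<cdot> h"
  then have "f \<cdot> (g \<ominus> h) = zr A W Y" using f comp_sub_right[OF gh f(1)] by simp
  then have "g \<ominus> h = zr A W X" using zr[OF W] gh f W by simp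
  then show "g = h" using sub_eq_zr_iff[OF gh W] f by blast
qed (use f in auto)

lemma epiI:
  assumes f: "f \<in> Hom A X Y" "X \<in> Ob A" "Y \<in> Ob A"
    and zr: "\<And>W z. W \<in> Ob A \<Longrightarrow> z \<in> Hom A Y W \<Longrightarrow> z \<cdot> f = zr A X W \<Longrightarrow> z = zr A Y W"
  shows "is_epi A X Y f"
  unfolding is_epi_def
proof (intro conjI ballI impI)
  fix W g h assume W: "W \<in> Ob A" and gh: "g \<in> Hom A Y W" "h \<in> Hom A Y W" and "g \<cdot> f = h \<cdot> f"
  then have "(g \<ominus> h) \<cdot> f = zr A X W" using f comp_sub_left[OF f(1) gh] by simp
  then have "g \<ominus> h = zr A Y W" using zr[OF W] gh f W by simp
  then show "g = h" using sub_eq_zr_iff[OF gh _ W] f by blast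
qed (use f in auto)

lemma biproductD:
  assumes "is_biproduct A X Y S i1 i2 p1 p2"
  shows "X \<in> Ob A" "Y \<in> Ob A" "S \<in> Ob A"
    "i1 \<in> Hom A X S" "i2 \<in> Hom A Y S" "p1 \<in> Hom A S X" "p2 \<in> Hom A S Y"
    "p1 \<cdot> i1 = idm A X" "p2 \<cdot> i2 = idm A Y" "p1 \<cdot> i2 = zr A Y X" "p2 \<cdot> i1 = zr A X Y"
    "i1 \<cdot> p1 \<oplus> i2 \<cdot> p2 = idm A S"
  using assms unfolding is_biproduct_def by auto

lemma biproduct_decomp_in:
  assumes S: "is_biproduct A X Y S i1 i2 p1 p2" and x: "x \<in> Hom A W S" "W \<in> Ob A"
  shows "x = i1 \<cdot> (p1 \<cdot> x) \<oplus> i2 \<cdot> (p2 \<cdot> x)"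
proof -
  note D = biproductD[OF S]
  have "x = (i1 \<cdot> p1 \<oplus> i2 \<cdot> p2) \<cdot> x" using D x by simp
  also have "\<dots> = i1 \<cdot> (p1 \<cdot> x) \<oplus> i2 \<cdot> (p2 \<cdot> x)"
    using comp_add_left[of x W S "i1 \<cdot> p1" S "i2 \<cdot> p2"] comp_assoc[OF x(1) D(6) D(4)]
      comp_assoc[OF x(1) D(7) D(5)] D x by simp
  finally show ?thesis .
qed

lemma biproduct_decomp_out:
  assumes S: "is_biproduct A X Y S i1 i2 p1 p2" and x: "x \<in> Hom A S W" "W \<in> Ob A"
  shows "x = (x \<cdot> i1) \<cdot> p1 \<oplus> (x \<cdot> i2) \<cdot> p2"
proof -
  note D = biproductD[OF S]
  have "x = x \<cdot> (i1 \<cdot> p1 \<oplus> i2 \<cdot> p2)" using D x by simp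
  also have "\<dots> = (x \<cdot> i1) \<cdot> p1 \<oplus> (x \<cdot> i2) \<cdot> p2"
    using comp_add_right[of "i1 \<cdot> p1" S S "i2 \<cdot> p2" x W] comp_assoc[OF D(6) D(4) x(1)]
      comp_assoc[OF D(7) D(5) x(1)] D x by simp
  finally show ?thesis .
qed

lemma biproduct_eq_in:
  assumes "is_biproduct A X Y S i1 i2 p1 p2" "x \<in> Hom A W S" "y \<in> Hom A W S" "W \<in> Ob A"
    "p1 \<cdot> x = p1 \<cdot> y" "p2 \<cdot> x = p2 \<cdot> y"
  shows "x = y"
  using biproduct_decomp_in[OF assms(1,2,4)] biproduct_decomp_in[OF assms(1,3,4)] assms(5,6) by simp

lemma biproduct_eq_out:
  assumes "is_biproduct A X Y S i1 i2 p1 p2" "x \<in> Hom A S W" "y \<in> Hom A S W" "W \<in> Ob A"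
    "x \<cdot> i1 = y \<cdot> i1" "x \<cdot> i2 = y \<cdot> i2"
  shows "x = y"
  using biproduct_decomp_out[OF assms(1,2,4)] biproduct_decomp_out[OF assms(1,3,4)] assms(5,6) by simp

lemma biproduct_pair:
  assumes S: "is_biproduct A X Y S i1 i2 p1 p2" and a: "a \<in> Hom A W X" and b: "b \<in> Hom A W Y"
    and W: "W \<in> Ob A"
  shows "i1 \<cdot> a \<oplus> i2 \<cdot> b \<in> Hom A W S"
    "p1 \<cdot> (i1 \<cdot> a \<oplus> i2 \<cdot> b) = a" "p2 \<cdot> (i1 \<cdot> a \<oplus> i2 \<cdot> b) = b"
proof -
  note D = biproductD[OF S]
  have ia: "i1 \<cdot> a \<in> Hom A W S" and ib: "i2 \<cdot> b \<in> Hom A W S" using D a b W by blast+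
  then show "i1 \<cdot> a \<oplus> i2 \<cdot> b \<in> Hom A W S" using D W by blast
  show "p1 \<cdot> (i1 \<cdot> a \<oplus> i2 \<cdot> b) = a" "p2 \<cdot> (i1 \<cdot> a \<oplus> i2 \<cdot> b) = b"
    using comp_add_right[OF ia ib D(6)] comp_add_right[OF ia ib D(7)]
      comp_assoc[OF a D(4) D(6), symmetric] comp_assoc[OF b D(5) D(6), symmetric]
      comp_assoc[OF a D(4) D(7), symmetric] comp_assoc[OF b D(5) D(7), symmetric] D a b W by simp_all
qed

lemma biproduct_copair:
  assumes S: "is_biproduct A X Y S i1 i2 p1 p2" and a: "a \<in> Hom A X W" and b: "b \<in> Hom A Y W"
    and W: "W \<in> Ob A"
  shows "a \<cdot> p1 \<oplus> b \<cdot> p2 \<in> Hom A S W"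
    "(a \<cdot> p1 \<oplus> b \<cdot> p2) \<cdot> i1 = a" "(a \<cdot> p1 \<oplus> b \<cdot> p2) \<cdot> i2 = b"
proof -
  note D = biproductD[OF S]
  have ap: "a \<cdot> p1 \<in> Hom A S W" and bp: "b \<cdot> p2 \<in> Hom A S W" using D a b W by blast+
  then show "a \<cdot> p1 \<oplus> b \<cdot> p2 \<in> Hom A S W" using D W by blast
  show "(a \<cdot> p1 \<oplus> b \<cdot> p2) \<cdot> i1 = a" "(a \<cdot> p1 \<oplus> b \<cdot> p2) \<cdot> i2 = b"
    using comp_add_left[OF D(4) ap bp] comp_add_left[OF D(5) ap bp]
      comp_assoc[OF D(4) D(6) a] comp_assoc[OF D(4) D(7) b]
      comp_assoc[OF D(5) D(6) a] comp_assoc[OF D(5) D(7) b] D a b W by simp_all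
qed


lemma biproduct_copair_comp:
  assumes S: "is_biproduct A X Y S i1 i2 p1 p2" and a: "a \<in> Hom A X Z" and b: "b \<in> Hom A Y Z"
    and x: "x \<in> Hom A W S" and Ob: "W \<in> Ob A" "Z \<in> Ob A"
  shows "(a \<cdot> p1 \<oplus> b \<cdot> p2) \<cdot> x = a \<cdot> (p1 \<cdot> x) \<oplus> b \<cdot> (p2 \<cdot> x)"
  using comp_add_left[OF x, of "a \<cdot> p1" Z "b \<cdot> p2"] comp_assoc[OF x _ a, of p1] comp_assoc[OF x _ b, of p2]
    biproductD[OF S] a b Ob by simp

lemma biproduct_comparison_iso:
  assumes S: "is_biproduct A X Y S i1 i2 p1 p2" and T: "is_biproduct A X Y T u v r s"
  shows "\<exists>h\<in>Hom A S T. h \<cdot> i1 = u \<and> h \<cdot> i2 = v \<and> is_iso A S T h"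
proof -
  note SD = biproductD[OF S] and TD = biproductD[OF T]
  define h where "h = u \<cdot> p1 \<oplus> v \<cdot> p2"
  define k where "k = i1 \<cdot> r \<oplus> i2 \<cdot> s"
  have h: "h \<in> Hom A S T" "h \<cdot> i1 = u" "h \<cdot> i2 = v"
    unfolding h_def using biproduct_copair[OF S TD(4,5,3)] by auto
  have k: "k \<in> Hom A T S" "p1 \<cdot> k = r" "p2 \<cdot> k = s"
    unfolding k_def using biproduct_pair[OF S TD(6,7,3)] by auto
  have ku: "k \<cdot> u = i1"
  proof (rule biproduct_eq_in[OF S _ SD(4) SD(1)])
    show "k \<cdot> u \<in> Hom A X S" using k TD SD by simp
    show "p1 \<cdot> (k \<cdot> u) = p1 \<cdot> i1" "p2 \<cdot> (k \<cdot> u) = p2 \<cdot> i1"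
      using comp_assoc[OF TD(4) k(1) SD(6), symmetric] comp_assoc[OF TD(4) k(1) SD(7), symmetric]
        k TD SD by simp_all
  qed
  have kv: "k \<cdot> v = i2"
  proof (rule biproduct_eq_in[OF S _ SD(5) SD(2)])
    show "k \<cdot> v \<in> Hom A Y S" using k TD SD by simp
    show "p1 \<cdot> (k \<cdot> v) = p1 \<cdot> i2" "p2 \<cdot> (k \<cdot> v) = p2 \<cdot> i2"
      using comp_assoc[OF TD(5) k(1) SD(6), symmetric] comp_assoc[OF TD(5) k(1) SD(7), symmetric]
        k TD SD by simp_all
  qed
  have "k \<cdot> h = idm A S"
  proof (rule biproduct_eq_out[OF S _ _ SD(3)])
    show "k \<cdot> h \<in> Hom A S S" using h k SD TD by simp
    show "(k \<cdot> h) \<cdot> i1 = idm A S \<cdot> i1" "(k \<cdot> h) \<cdot> i2 = idm A S \<cdot> i2"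
      using comp_assoc[OF SD(4) h(1) k(1)] comp_assoc[OF SD(5) h(1) k(1)] h ku kv SD TD by simp_all
  qed (use SD in simp)
  moreover have "h \<cdot> k = idm A T"
  proof -
    have "h \<cdot> k = (h \<cdot> i1) \<cdot> r \<oplus> (h \<cdot> i2) \<cdot> s"
      unfolding k_def using comp_add_right[of "i1 \<cdot> r" T S "i2 \<cdot> s" h T]
        comp_assoc[OF TD(6) SD(4) h(1)] comp_assoc[OF TD(7) SD(5) h(1)] h SD TD by simp
    then show ?thesis using h TD by simp
  qed
  ultimately show ?thesis unfolding is_iso_def using h k by blast
qed

lemma split_kernel_biproduct:
  assumes u: "is_kernel A X T Y u s" and v: "v \<in> Hom A Y T" and sv: "s \<cdot> v = idm A Y"
  shows "\<exists>r. is_biproduct A X Y T u v r s"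
proof -
  note K = kernelD[OF u]
  have vs: "v \<cdot> s \<in> Hom A T T" using K v by blast
  have x: "idm A T \<ominus> v \<cdot> s \<in> Hom A T T" using K vs by blast
  have "s \<cdot> (idm A T \<ominus> v \<cdot> s) = zr A T Y"
    using comp_sub_right[OF _ vs K(5)] comp_assoc[OF K(5) v K(5), symmetric] sv K by simp
  then obtain r where r: "r \<in> Hom A T X" "u \<cdot> r = idm A T \<ominus> v \<cdot> s"
    using kernel_factor[OF u x K(2)] by blast
  have "u \<cdot> (r \<cdot> u) = u \<cdot> idm A X"
    using comp_assoc[OF K(4) r(1) K(4), symmetric] comp_sub_left[OF K(4) _ vs]
      comp_assoc[OF K(4) K(5) v] r K v by simp
  then have ru: "r \<cdot> u = idm A X" using kernel_cancel[OF u] r K by blast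
  have "u \<cdot> (r \<cdot> v) = u \<cdot> zr A Y X"
    using comp_assoc[OF v r(1) K(4), symmetric] comp_sub_left[OF v _ vs]
      comp_assoc[OF v K(5) v] r sv K v by simp
  then have rv: "r \<cdot> v = zr A Y X" using kernel_cancel[OF u] r K v by blast
  have "u \<cdot> r \<oplus> v \<cdot> s = idm A T" using r add_sub_cancel[OF idm_closed vs] K by simp
  then show ?thesis unfolding is_biproduct_def using K r ru rv sv v by blast
qed

lemma iso_matrix_stable_inverse:
  assumes S: "is_biproduct A M Q S i1 i2 p1 p2" and T: "is_biproduct A N P T j1 j2 q1 q2"
    and h: "is_iso A S T h"
    and f: "q1 \<cdot> (h \<cdot> i1) = f" and g1: "q1 \<cdot> (h \<cdot> i2) = g1" and l: "q2 \<cdot> (h \<cdot> i1) = l"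
  shows "\<exists>g\<in>Hom A N M. \<exists>b\<in>Hom A N Q. \<exists>a\<in>Hom A P M.
           f \<cdot> g \<oplus> g1 \<cdot> b = idm A N \<and> g \<cdot> f \<oplus> a \<cdot> l = idm A M"
proof -
  note SD = biproductD[OF S] and TD = biproductD[OF T]
  have hh: "h \<in> Hom A S T" using h unfolding is_iso_def by blast
  obtain k where k: "k \<in> Hom A T S" "k \<cdot> h = idm A S" "h \<cdot> k = idm A T"
    using h unfolding is_iso_def by blast
  define g where "g = p1 \<cdot> (k \<cdot> j1)"
  define b where "b = p2 \<cdot> (k \<cdot> j1)"
  define a where "a = p1 \<cdot> (k \<cdot> j2)"
  have kj1: "k \<cdot> j1 \<in> Hom A N S" and kj2: "k \<cdot> j2 \<in> Hom A P S" using k TD SD by simp_all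
  have q1h: "q1 \<cdot> h \<in> Hom A S N" and hi1: "h \<cdot> i1 \<in> Hom A M T" and p1k: "p1 \<cdot> k \<in> Hom A T M"
    using hh k TD SD by simp_all
  have fh: "f \<in> Hom A M N" "g1 \<in> Hom A Q N" "l \<in> Hom A M P"
    using f g1 l hh SD TD by auto
  have "q1 \<cdot> h = ((q1 \<cdot> h) \<cdot> i1) \<cdot> p1 \<oplus> ((q1 \<cdot> h) \<cdot> i2) \<cdot> p2"
    using biproduct_decomp_out[OF S q1h TD(1)] .
  then have q1h_eq: "q1 \<cdot> h = f \<cdot> p1 \<oplus> g1 \<cdot> p2"
    using comp_assoc[OF SD(4) hh TD(6)] comp_assoc[OF SD(5) hh TD(6)] f g1 SD TD by simp
  have "idm A N = (q1 \<cdot> h) \<cdot> (k \<cdot> j1)"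
    using comp_assoc[OF kj1 hh TD(6)] comp_assoc[OF TD(4) k(1) hh, symmetric] k TD SD by simp
  also have "\<dots> = f \<cdot> g \<oplus> g1 \<cdot> b"
    unfolding q1h_eq g_def b_def
    using comp_add_left[OF kj1, of "f \<cdot> p1" N "g1 \<cdot> p2"] comp_assoc[OF kj1 SD(6) fh(1)]
      comp_assoc[OF kj1 SD(7) fh(2)] fh SD TD by simp
  finally have fg: "f \<cdot> g \<oplus> g1 \<cdot> b = idm A N" ..
  have "h \<cdot> i1 = j1 \<cdot> (q1 \<cdot> (h \<cdot> i1)) \<oplus> j2 \<cdot> (q2 \<cdot> (h \<cdot> i1))"
    using biproduct_decomp_in[OF T hi1 SD(1)] .
  then have hi1_eq: "h \<cdot> i1 = j1 \<cdot> f \<oplus> j2 \<cdot> l" using f l by simp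
  have "idm A M = (p1 \<cdot> k) \<cdot> (h \<cdot> i1)"
    using comp_assoc[OF hi1 k(1) SD(6)] comp_assoc[OF SD(4) hh k(1)] k TD SD by simp
  also have "\<dots> = g \<cdot> f \<oplus> a \<cdot> l"
    unfolding hi1_eq g_def a_def
    using comp_add_right[of "j1 \<cdot> f" M T "j2 \<cdot> l" "p1 \<cdot> k" M] comp_assoc[OF fh(1) TD(4) p1k]
      comp_assoc[OF fh(3) TD(5) p1k] comp_assoc[OF TD(4) k(1) SD(6)] comp_assoc[OF TD(5) k(1) SD(6)]
      fh p1k SD TD by simp
  finally have gf: "g \<cdot> f \<oplus> a \<cdot> l = idm A M" ..
  have "g \<in> Hom A N M" "b \<in> Hom A N Q" "a \<in> Hom A P M"
    unfolding g_def b_def a_def using kj1 kj2 SD TD by simp_all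
  then show ?thesis using fg gf by blast
qed

subsection \<open>Pushouts\<close>

definition is_pushout :: "'o \<Rightarrow> 'o \<Rightarrow> 'o \<Rightarrow> 'o \<Rightarrow> 'm \<Rightarrow> 'm \<Rightarrow> 'm \<Rightarrow> 'm \<Rightarrow> bool" where
  "is_pushout M E N P i a b j \<longleftrightarrow>
     M \<in> Ob A \<and> E \<in> Ob A \<and> N \<in> Ob A \<and> P \<in> Ob A \<and>
     i \<in> Hom A M E \<and> a \<in> Hom A M N \<and> b \<in> Hom A E P \<and> j \<in> Hom A N P \<and> b \<cdot> i = j \<cdot> a \<and>
     (\<forall>W\<in>Ob A. \<forall>x\<in>Hom A E W. \<forall>y\<in>Hom A N W. x \<cdot> i = y \<cdot> a \<longrightarrow>
        (\<exists>!h. h \<in> Hom A P W \<and> h \<cdot> b = x \<and> h \<cdot> j = y))"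

lemma pushoutD:
  assumes "is_pushout M E N P i a b j"
  shows "M \<in> Ob A" "E \<in> Ob A" "N \<in> Ob A" "P \<in> Ob A"
    "i \<in> Hom A M E" "a \<in> Hom A M N" "b \<in> Hom A E P" "j \<in> Hom A N P" "b \<cdot> i = j \<cdot> a"
  using assms unfolding is_pushout_def by auto

lemma pushout_factor:
  assumes "is_pushout M E N P i a b j" "W \<in> Ob A" "x \<in> Hom A E W" "y \<in> Hom A N W" "x \<cdot> i = y \<cdot> a"
  shows "\<exists>h\<in>Hom A P W. h \<cdot> b = x \<and> h \<cdot> j = y"
  using assms unfolding is_pushout_def by blast

lemma pushout_cancel:
  assumes P: "is_pushout M E N P i a b j" and W: "W \<in> Ob A"
    and h: "h \<in> Hom A P W" "h' \<in> Hom A P W" "h \<cdot> b = h' \<cdot> b" "h \<cdot> j = h' \<cdot> j"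
  shows "h = h'"
proof -
  note D = pushoutD[OF P]
  have "(h \<cdot> b) \<cdot> i = (h \<cdot> j) \<cdot> a"
    using comp_assoc[OF D(5,7) h(1)] comp_assoc[OF D(6,8) h(1)] D W by simp
  moreover have "h \<cdot> b \<in> Hom A E W" "h \<cdot> j \<in> Hom A N W" using D W h by blast+
  ultimately have "\<exists>!g. g \<in> Hom A P W \<and> g \<cdot> b = h \<cdot> b \<and> g \<cdot> j = h \<cdot> j"
    using P W unfolding is_pushout_def by blast
  then show ?thesis using h by metis
qed

lemma cokernel_is_pushout:
  assumes B: "is_biproduct A E N B e1 e2 r1 r2" and i: "i \<in> Hom A M E" and a: "a \<in> Hom A M N"
    and M: "M \<in> Ob A" and c: "is_cokernel A M B P (e1 \<cdot> i \<ominus> e2 \<cdot> a) c"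
  shows "is_pushout M E N P i a (c \<cdot> e1) (c \<cdot> e2)"
proof -
  note BD = biproductD[OF B] and CD = cokernelD[OF c]
  have ei: "e1 \<cdot> i \<in> Hom A M B" and ea: "e2 \<cdot> a \<in> Hom A M B" using BD i a M by blast+
  have comp_m: "x \<cdot> (e1 \<cdot> i \<ominus> e2 \<cdot> a) = (x \<cdot> e1) \<cdot> i \<ominus> (x \<cdot> e2) \<cdot> a"
    if "x \<in> Hom A B W" "W \<in> Ob A" for x W
    using comp_sub_right[OF ei ea that(1)] comp_assoc[OF i BD(4) that(1)]
      comp_assoc[OF a BD(5) that(1)] that BD M by simp
  have "(c \<cdot> e1) \<cdot> i \<ominus> (c \<cdot> e2) \<cdot> a = zr A M P" using comp_m[OF CD(5,3)] CD by simp
  then have square: "(c \<cdot> e1) \<cdot> i = (c \<cdot> e2) \<cdot> a"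
    using sub_eq_zr_iff[of "(c \<cdot> e1) \<cdot> i" M P] BD CD i a M by blast
  have universal: "\<exists>!h. h \<in> Hom A P W \<and> h \<cdot> (c \<cdot> e1) = x \<and> h \<cdot> (c \<cdot> e2) = y"
    if W: "W \<in> Ob A" and xy: "x \<in> Hom A E W" "y \<in> Hom A N W" "x \<cdot> i = y \<cdot> a" for W x y
  proof -
    note g = biproduct_copair[OF B xy(1,2) W]
    have "(x \<cdot> r1 \<oplus> y \<cdot> r2) \<cdot> (e1 \<cdot> i \<ominus> e2 \<cdot> a) = zr A M W"
      using comp_m[OF g(1) W] g xy i a M W BD by simp
    then obtain h where h: "h \<in> Hom A P W" "h \<cdot> c = x \<cdot> r1 \<oplus> y \<cdot> r2"
      using cokernel_factor[OF c g(1) W] by blast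
    have hxy: "h \<cdot> (c \<cdot> e1) = x" "h \<cdot> (c \<cdot> e2) = y"
      using comp_assoc[OF BD(4) CD(5) h(1)] comp_assoc[OF BD(5) CD(5) h(1)] h g BD CD W by simp_all
    have uniq: "h' = h"
      if h': "h' \<in> Hom A P W" "h' \<cdot> (c \<cdot> e1) = x" "h' \<cdot> (c \<cdot> e2) = y" for h'
    proof -
      have "h' \<cdot> c = h \<cdot> c"
      proof (rule biproduct_eq_out[OF B _ _ W])
        show "h' \<cdot> c \<in> Hom A B W" "h \<cdot> c \<in> Hom A B W"
          using comp_closed[OF CD(5) h'(1)] comp_closed[OF CD(5) h(1)] CD W by simp_all
        show "(h' \<cdot> c) \<cdot> e1 = (h \<cdot> c) \<cdot> e1" "(h' \<cdot> c) \<cdot> e2 = (h \<cdot> c) \<cdot> e2"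
          using comp_assoc[OF BD(4) CD(5) h'(1)] comp_assoc[OF BD(4) CD(5) h(1)]
            comp_assoc[OF BD(5) CD(5) h'(1)] comp_assoc[OF BD(5) CD(5) h(1)] h' hxy BD CD W by simp_all
      qed
      then show ?thesis using cokernel_cancel[OF c h'(1) h(1) W] by blast
    qed
    show ?thesis using h(1) hxy uniq by (intro ex1I[of _ h]) blast+
  qed
  have "c \<cdot> e1 \<in> Hom A E P" "c \<cdot> e2 \<in> Hom A N P" using BD CD by simp_all
  then show ?thesis unfolding is_pushout_def using square universal BD CD i a M by blast
qed

lemma pushout_cokernel:
  assumes P: "is_pushout M E N P i a b j" and p: "is_cokernel A M E Y i p"
  shows "\<exists>q. is_cokernel A N P Y j q \<and> q \<cdot> b = p"
proof -
  note D = pushoutD[OF P] and CD = cokernelD[OF p]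
  obtain q where q: "q \<in> Hom A P Y" "q \<cdot> b = p" "q \<cdot> j = zr A N Y"
    using pushout_factor[OF P CD(3) CD(5) zr_closed[OF D(3) CD(3)]] CD D by auto
  have "is_cokernel A N P Y j q" unfolding is_cokernel_def
  proof (intro conjI ballI impI)
    fix W g assume W: "W \<in> Ob A" and g: "g \<in> Hom A P W" "g \<cdot> j = zr A N W"
    have "(g \<cdot> b) \<cdot> i = zr A M W"
      using comp_assoc[OF D(5,7) g(1)] D(9) comp_assoc[OF D(6,8) g(1), symmetric] g D W by simp
    then obtain h where h: "h \<in> Hom A Y W" "h \<cdot> p = g \<cdot> b"
      using cokernel_factor[OF p _ W] g D W by blast
    have "h \<cdot> q = g"
    proof (rule pushout_cancel[OF P W _ g(1)])
      show "h \<cdot> q \<in> Hom A P W" using comp_closed[OF q(1) h(1)] D CD W by simp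
      show "(h \<cdot> q) \<cdot> b = g \<cdot> b" "(h \<cdot> q) \<cdot> j = g \<cdot> j"
        using comp_assoc[OF D(7) q(1) h(1)] comp_assoc[OF D(8) q(1) h(1)] q h g D CD W by simp_all
    qed
    moreover have "h' = h''" if "h' \<in> Hom A Y W" "h'' \<in> Hom A Y W" "h' \<cdot> q = h'' \<cdot> q" for h' h''
      using cokernel_cancel[OF p that(1,2) W] that comp_assoc[OF D(7) q(1) that(1)]
        comp_assoc[OF D(7) q(1) that(2)] q D CD W by simp
    ultimately show "\<exists>!h. h \<in> Hom A Y W \<and> h \<cdot> q = g" using h(1) by blast
  qed (use q D CD in auto)
  then show ?thesis using q by blast
qed

end

section \<open>Abelian categories\<close>

locale abelian_category =
  fixes A :: "('o, 'm) cat"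
  assumes abelian: "abelian A"

sublocale abelian_category \<subseteq> preadditive_category
  using abelian unfolding abelian_def by unfold_locales blast

context abelian_category
begin

lemma biproduct_exists: "X \<in> Ob A \<Longrightarrow> Y \<in> Ob A \<Longrightarrow> \<exists>S i1 i2 p1 p2. is_biproduct A X Y S i1 i2 p1 p2"
  using abelian unfolding abelian_def by blast

lemma cokernel_exists:
  "f \<in> Hom A X Y \<Longrightarrow> X \<in> Ob A \<Longrightarrow> Y \<in> Ob A \<Longrightarrow> \<exists>Q q. is_cokernel A X Y Q f q"
  using abelian unfolding abelian_def by blast

lemma mono_is_kernel:
  "is_mono A X Y f \<Longrightarrow> X \<in> Ob A \<Longrightarrow> Y \<in> Ob A \<Longrightarrow> \<exists>Z g. is_kernel A X Y Z f g"
  using abelian unfolding abelian_def by blast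

lemma epi_is_cokernel:
  "is_epi A X Y f \<Longrightarrow> X \<in> Ob A \<Longrightarrow> Y \<in> Ob A \<Longrightarrow> \<exists>Z g. is_cokernel A Z X Y g f"
  using abelian unfolding abelian_def by blast

lemma mono_is_kernel_of_cokernel:
  assumes m: "is_mono A X Y m" and c: "is_cokernel A X Y Q m c"
  shows "is_kernel A X Y Q m c"
proof -
  note CD = cokernelD[OF c]
  obtain Z g where g: "is_kernel A X Y Z m g" using mono_is_kernel[OF m] CD by blast
  note KD = kernelD[OF g]
  obtain t where t: "t \<in> Hom A Q Z" "t \<cdot> c = g"
    using cokernel_factor[OF c KD(5) KD(3) KD(6)] by blast
  show ?thesis
  proof (rule kernelI[OF m CD(5,1,2,3,6)])
    fix W z assume W: "W \<in> Ob A" and z: "z \<in> Hom A W Y" "c \<cdot> z = zr A W Q"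
    have "g \<cdot> z = zr A W Z" using comp_assoc[OF z(1) CD(5) t(1)] t CD KD z W by simp
    then show "\<exists>h\<in>Hom A W X. m \<cdot> h = z" using kernel_factor[OF g z(1) W] by blast
  qed
qed

lemma mono_epi_is_iso:
  assumes m: "is_mono A X Y f" and e: "is_epi A X Y f" and "X \<in> Ob A" "Y \<in> Ob A"
  shows "is_iso A X Y f"
proof -
  have f: "f \<in> Hom A X Y" using m unfolding is_mono_def by blast
  obtain Z g where c: "is_cokernel A Z X Y g f" using epi_is_cokernel[OF e] assms by blast
  note CD = cokernelD[OF c]
  have "f \<cdot> g = f \<cdot> zr A Z X" using CD f assms by simp
  then have "g = zr A Z X" using mono_cancel[OF m CD(4) zr_closed CD(1)] CD assms by simp
  then have "idm A X \<cdot> g = zr A Z X" using CD assms by simp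
  then obtain h where h: "h \<in> Hom A Y X" "h \<cdot> f = idm A X"
    using cokernel_factor[OF c idm_closed[OF \<open>X \<in> Ob A\<close>]] CD assms by blast
  have fh: "f \<cdot> h \<in> Hom A Y Y" using f h assms by simp
  have "(f \<cdot> h) \<cdot> f = idm A Y \<cdot> f" using comp_assoc[OF f h(1) f] h f assms by simp
  then have "f \<cdot> h = idm A Y" using epi_cancel[OF e fh idm_closed] assms by simp
  then show ?thesis unfolding is_iso_def using f h by blast
qed

lemma cokernel_pushout_mono:
  assumes B: "is_biproduct A E N B e1 e2 r1 r2" and i: "is_mono A M E i" and a: "a \<in> Hom A M N"
    and M: "M \<in> Ob A" and c: "is_cokernel A M B P (e1 \<cdot> i \<ominus> e2 \<cdot> a) c"
  shows "is_mono A N P (c \<cdot> e2)"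
proof -
  note BD = biproductD[OF B] and CD = cokernelD[OF c]
  define m where "m = e1 \<cdot> i \<ominus> e2 \<cdot> a"
  have ih: "i \<in> Hom A M E" using i unfolding is_mono_def by blast
  have ei: "e1 \<cdot> i \<in> Hom A M B" and ea: "e2 \<cdot> a \<in> Hom A M B" using BD ih a M by simp_all
  have mh: "m \<in> Hom A M B" unfolding m_def using ei ea BD M by simp
  have r1m: "r1 \<cdot> (m \<cdot> w) = i \<cdot> w" if w: "w \<in> Hom A W M" "W \<in> Ob A" for W w
  proof -
    have "r1 \<cdot> m = i"
      unfolding m_def using comp_sub_right[OF ei ea BD(6)] comp_assoc[OF ih BD(4) BD(6), symmetric]
        comp_assoc[OF a BD(5) BD(6), symmetric] BD ih a M by simp
    then show ?thesis using comp_assoc[OF w(1) mh BD(6)] BD M w by simp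
  qed
  have zr_if_i_zr: "w = zr A W M" if w: "w \<in> Hom A W M" "W \<in> Ob A" "i \<cdot> w = zr A W E" for W w
  proof (rule mono_cancel[OF i w(1) _ w(2)])
    show "i \<cdot> w = i \<cdot> zr A W M" using w ih BD M by simp
  qed (use w M in simp)
  have "is_mono A M B m"
  proof (rule monoI[OF mh M BD(3)])
    fix W z assume W: "W \<in> Ob A" and z: "z \<in> Hom A W M" "m \<cdot> z = zr A W B"
    have "i \<cdot> z = zr A W E" using r1m[OF z(1) W, symmetric] z BD W by simp
    then show "z = zr A W M" using zr_if_i_zr[OF z(1) W] by blast
  qed
  then have km: "is_kernel A M B P m c" using mono_is_kernel_of_cokernel c unfolding m_def by blast
  show ?thesis
  proof (rule monoI)
    fix W z assume W: "W \<in> Ob A" and z: "z \<in> Hom A W N" "(c \<cdot> e2) \<cdot> z = zr A W P"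
    have ez: "e2 \<cdot> z \<in> Hom A W B" using z BD W by simp
    obtain w where w: "w \<in> Hom A W M" "m \<cdot> w = e2 \<cdot> z"
      using kernel_factor[OF km ez W] z comp_assoc[OF z(1) BD(5) CD(5)] BD CD W by auto
    have "i \<cdot> w = zr A W E"
      using r1m[OF w(1) W] w comp_assoc[OF z(1) BD(5) BD(6), symmetric] BD W z by simp
    then have "e2 \<cdot> z = zr A W B" using w zr_if_i_zr[OF w(1) W] mh BD M W by simp
    then show "z = zr A W N" using comp_assoc[OF z(1) BD(5) BD(7), symmetric] BD z W by simp
  qed (use BD CD in simp_all)
qed

lemma pushout_of_mono_exists:
  assumes i: "is_mono A M E i" and a: "a \<in> Hom A M N" and "M \<in> Ob A" "E \<in> Ob A" "N \<in> Ob A"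
  shows "\<exists>P b j. is_pushout M E N P i a b j \<and> is_mono A N P j"
proof -
  have ih: "i \<in> Hom A M E" using i unfolding is_mono_def by blast
  obtain B e1 e2 r1 r2 where B: "is_biproduct A E N B e1 e2 r1 r2"
    using biproduct_exists assms by blast
  note BD = biproductD[OF B]
  have "e1 \<cdot> i \<ominus> e2 \<cdot> a \<in> Hom A M B" using BD ih a assms by simp
  then obtain P c where c: "is_cokernel A M B P (e1 \<cdot> i \<ominus> e2 \<cdot> a) c"
    using cokernel_exists BD assms by blast
  show ?thesis
    using cokernel_is_pushout[OF B ih a _ c] cokernel_pushout_mono[OF B i a _ c] assms by blast
qed

end

section \<open>Conflations and the action of morphisms on \<open>Ext\<^sup>1\<close>\<close>

locale exact_subcategory = abelian_category +
  fixes C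
  assumes ext_closed: "ext_closed_additive A C"
begin

lemma subcategory_Ob: "X \<in> C \<Longrightarrow> X \<in> Ob A"
  using ext_closed unfolding ext_closed_additive_def by blast

lemma conflationD:
  assumes "conflation A C X E Y i p"
  shows "X \<in> C" "E \<in> C" "Y \<in> C" "X \<in> Ob A" "E \<in> Ob A" "Y \<in> Ob A"
    "i \<in> Hom A X E" "p \<in> Hom A E Y" "p \<cdot> i = zr A X Y"
    "is_kernel A X E Y i p" "is_cokernel A X E Y i p"
  using assms subcategory_Ob unfolding conflation_def short_exact_def is_kernel_def by auto

lemma ext_pushE:
  assumes "ext_push A f E i p F j q"
  obtains \<phi> where "\<phi> \<in> Hom A E F" "\<phi> \<cdot> i = j \<cdot> f" "q \<cdot> \<phi> = p"
  using assms unfolding ext_push_def by blast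

lemma ext_push_comp:
  assumes E: "conflation A C M E X i p" and F: "conflation A C N F X j q"
    and G: "conflation A C K G X k r" and f: "f \<in> Hom A M N" and g: "g \<in> Hom A N K"
    and "ext_push A f E i p F j q" "ext_push A g F j q G k r"
  shows "ext_push A (g \<cdot> f) E i p G k r"
proof -
  note ED = conflationD[OF E] and FD = conflationD[OF F] and GD = conflationD[OF G]
  obtain \<phi> where \<phi>: "\<phi> \<in> Hom A E F" "\<phi> \<cdot> i = j \<cdot> f" "q \<cdot> \<phi> = p"
    using assms(6) by (rule ext_pushE)
  obtain \<chi> where \<chi>: "\<chi> \<in> Hom A F G" "\<chi> \<cdot> j = k \<cdot> g" "r \<cdot> \<chi> = q"
    using assms(7) by (rule ext_pushE)
  have "(\<chi> \<cdot> \<phi>) \<cdot> i = k \<cdot> (g \<cdot> f)"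
    using comp_assoc[OF ED(7) \<phi>(1) \<chi>(1)] comp_assoc[OF f FD(7) \<chi>(1), symmetric]
      comp_assoc[OF f g GD(7)] \<phi> \<chi> ED FD GD by simp
  moreover have "r \<cdot> (\<chi> \<cdot> \<phi>) = p"
    using comp_assoc[OF \<phi>(1) \<chi>(1) GD(8), symmetric] \<phi> \<chi> ED FD GD by simp
  moreover have "\<chi> \<cdot> \<phi> \<in> Hom A E G" using \<phi> \<chi> ED FD GD by simp
  ultimately show ?thesis unfolding ext_push_def by blast
qed

lemma ext_push_add:
  assumes E: "conflation A C M E X i p" and G: "conflation A C N G X k r"
    and c: "c \<in> Hom A M N" and u: "u \<in> Hom A E N" and "ext_push A c E i p G k r"
  shows "ext_push A (c \<oplus> u \<cdot> i) E i p G k r"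
proof -
  note ED = conflationD[OF E] and GD = conflationD[OF G]
  obtain \<psi> where \<psi>: "\<psi> \<in> Hom A E G" "\<psi> \<cdot> i = k \<cdot> c" "r \<cdot> \<psi> = p"
    using assms(5) by (rule ext_pushE)
  have ku: "k \<cdot> u \<in> Hom A E G" and ui: "u \<cdot> i \<in> Hom A M N" using u ED GD by simp_all
  have "(\<psi> \<oplus> k \<cdot> u) \<cdot> i = k \<cdot> (c \<oplus> u \<cdot> i)"
    using comp_add_left[OF ED(7) \<psi>(1) ku] comp_add_right[OF c ui GD(7)]
      comp_assoc[OF ED(7) u GD(7)] \<psi> ED GD by simp
  moreover have "r \<cdot> (\<psi> \<oplus> k \<cdot> u) = p"
    using comp_add_right[OF \<psi>(1) ku GD(8)] comp_assoc[OF u GD(7) GD(8), symmetric] \<psi> u ED GD by simp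
  moreover have "\<psi> \<oplus> k \<cdot> u \<in> Hom A E G" using \<psi> ku ED GD by simp
  ultimately show ?thesis unfolding ext_push_def by blast
qed

lemma ext_push_diff:
  assumes E: "conflation A C M E X i p" and G: "conflation A C N G X k r"
    and c: "c \<in> Hom A M N" and c': "c' \<in> Hom A M N"
    and "ext_push A c E i p G k r" "ext_push A c' E i p G k r"
  shows "\<exists>u\<in>Hom A E N. c \<oplus> u \<cdot> i = c'"
proof -
  note ED = conflationD[OF E] and GD = conflationD[OF G]
  obtain \<psi> where \<psi>: "\<psi> \<in> Hom A E G" "\<psi> \<cdot> i = k \<cdot> c" "r \<cdot> \<psi> = p"
    using assms(5) by (rule ext_pushE)
  obtain \<psi>' where \<psi>': "\<psi>' \<in> Hom A E G" "\<psi>' \<cdot> i = k \<cdot> c'" "r \<cdot> \<psi>' = p"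
    using assms(6) by (rule ext_pushE)
  have "r \<cdot> (\<psi>' \<ominus> \<psi>) = zr A E X" using comp_sub_right[OF \<psi>'(1) \<psi>(1) GD(8)] \<psi> \<psi>' ED GD by simp
  then obtain u where u: "u \<in> Hom A E N" "k \<cdot> u = \<psi>' \<ominus> \<psi>"
    using kernel_factor[OF GD(10) _ ED(5)] \<psi> \<psi>' ED GD by (metis add_closed neg_closed)
  have "k \<cdot> (u \<cdot> i) = k \<cdot> (c' \<ominus> c)"
    using comp_assoc[OF ED(7) u(1) GD(7), symmetric] comp_sub_left[OF ED(7) \<psi>'(1) \<psi>(1)]
      comp_sub_right[OF c' c GD(7)] u \<psi> \<psi>' ED GD by simp
  moreover have "u \<cdot> i \<in> Hom A M N" "c' \<ominus> c \<in> Hom A M N" using u c c' ED GD by simp_all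
  ultimately have "u \<cdot> i = c' \<ominus> c" using kernel_cancel[OF GD(10)] ED by blast
  then have "c \<oplus> u \<cdot> i = c'" using add_commute[of c M N "c' \<ominus> c"] c c' ED GD by simp
  then show ?thesis using u by blast
qed

lemma yoneda_equiv_iff_ext_push_idm:
  assumes "conflation A C M E X i p" "conflation A C M F X j q"
  shows "yoneda_equiv A E X i p F j q \<longleftrightarrow> ext_push A (idm A M) E i p F j q"
  using conflationD[OF assms(2)] unfolding yoneda_equiv_def ext_push_def by simp

lemma yoneda_equiv_trans:
  assumes E: "conflation A C M E X i p" and F: "conflation A C M F X j q"
    and G: "conflation A C M G X k r"
    and "yoneda_equiv A E X i p F j q" "yoneda_equiv A F X j q G k r"
  shows "yoneda_equiv A E X i p G k r"
  using ext_push_comp[OF E F G idm_closed idm_closed] comp_idm_left[OF idm_closed] assms conflationD[OF E]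
  by (simp add: yoneda_equiv_iff_ext_push_idm)

lemma yoneda_equiv_sym:
  assumes E: "conflation A C M E X i p" and F: "conflation A C M F X j q"
    and "yoneda_equiv A E X i p F j q"
  shows "yoneda_equiv A F X j q E i p"
proof -
  note ED = conflationD[OF E] and FD = conflationD[OF F]
  obtain \<psi> where \<psi>: "\<psi> \<in> Hom A E F" "\<psi> \<cdot> i = j" "q \<cdot> \<psi> = p"
    using assms(3) unfolding yoneda_equiv_def by blast
  have "is_mono A E F \<psi>"
  proof (rule monoI[OF \<psi>(1) ED(5) FD(5)])
    fix W z assume W: "W \<in> Ob A" and z: "z \<in> Hom A W E" "\<psi> \<cdot> z = zr A W F"
    have "p \<cdot> z = zr A W X"
      using comp_assoc[OF z(1) \<psi>(1) FD(8), symmetric] \<psi> z ED FD W by simp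
    then obtain w where w: "w \<in> Hom A W M" "i \<cdot> w = z" using kernel_factor[OF ED(10) z(1) W] by blast
    have "j \<cdot> w = j \<cdot> zr A W M"
      using comp_assoc[OF w(1) ED(7) \<psi>(1), symmetric] \<psi> w z ED FD W by simp
    then have "w = zr A W M" using kernel_cancel[OF FD(10) w(1) zr_closed W] ED W by simp
    then show "z = zr A W E" using w ED W by simp
  qed
  moreover have "is_epi A E F \<psi>"
  proof (rule epiI[OF \<psi>(1) ED(5) FD(5)])
    fix W y assume W: "W \<in> Ob A" and y: "y \<in> Hom A F W" "y \<cdot> \<psi> = zr A E W"
    have "y \<cdot> j = zr A M W"
      using comp_assoc[OF ED(7) \<psi>(1) y(1), symmetric] \<psi> y ED FD W by simp
    then obtain t where t: "t \<in> Hom A X W" "t \<cdot> q = y" using cokernel_factor[OF FD(11) y(1) W] by blast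
    have "t \<cdot> p = zr A X W \<cdot> p"
      using comp_assoc[OF \<psi>(1) FD(8) t(1)] \<psi> t y ED FD W by simp
    then have "t = zr A X W" using cokernel_cancel[OF ED(11) t(1) zr_closed W] ED W by simp
    then show "y = zr A F W" using t FD W by simp
  qed
  ultimately obtain \<psi>' where \<psi>': "\<psi>' \<in> Hom A F E" "\<psi>' \<cdot> \<psi> = idm A E" "\<psi> \<cdot> \<psi>' = idm A F"
    using mono_epi_is_iso ED FD unfolding is_iso_def by blast
  have "\<psi>' \<cdot> j = i" using comp_assoc[OF ED(7) \<psi>(1) \<psi>'(1)] \<psi> \<psi>' ED FD by simp
  moreover have "p \<cdot> \<psi>' = q" using comp_assoc[OF \<psi>'(1) \<psi>(1) FD(8)] \<psi> \<psi>' ED FD by simp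
  ultimately show ?thesis unfolding yoneda_equiv_def using \<psi>'(1) by blast
qed

lemma split_conf_iff_ext_push_zr:
  assumes E: "conflation A C M E X i p" and F: "conflation A C N F X j q"
  shows "split_conf A F X q \<longleftrightarrow> ext_push A (zr A M N) E i p F j q"
proof
  note ED = conflationD[OF E] and FD = conflationD[OF F]
  assume "split_conf A F X q"
  then obtain s where s: "s \<in> Hom A X F" "q \<cdot> s = idm A X" unfolding split_conf_def by blast
  have "(s \<cdot> p) \<cdot> i = j \<cdot> zr A M N" using comp_assoc[OF ED(7,8) s(1)] s ED FD by simp
  moreover have "q \<cdot> (s \<cdot> p) = p" using comp_assoc[OF ED(8) s(1) FD(8), symmetric] s ED FD by simp
  moreover have "s \<cdot> p \<in> Hom A E F" using s ED FD by simp
  ultimately show "ext_push A (zr A M N) E i p F j q" unfolding ext_push_def by blast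
next
  note ED = conflationD[OF E] and FD = conflationD[OF F]
  assume "ext_push A (zr A M N) E i p F j q"
  then obtain \<phi> where \<phi>: "\<phi> \<in> Hom A E F" "\<phi> \<cdot> i = j \<cdot> zr A M N" "q \<cdot> \<phi> = p" by (rule ext_pushE)
  obtain s where s: "s \<in> Hom A X F" "s \<cdot> p = \<phi>"
    using cokernel_factor[OF ED(11) \<phi>(1) FD(5)] \<phi> ED FD by auto
  have "(q \<cdot> s) \<cdot> p = idm A X \<cdot> p" using comp_assoc[OF ED(8) s(1) FD(8)] s \<phi> ED FD by simp
  then have "q \<cdot> s = idm A X" using cokernel_cancel[OF ED(11) _ idm_closed] s ED FD by (simp add: comp_closed)
  then show "split_conf A F X q" unfolding split_conf_def using s(1) by blast
qed

lemma ext_push_through_pushout: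
  assumes P: "is_pushout M E N F i a b j"
    and q: "q \<in> Hom A F X" "q \<cdot> b = p" "q \<cdot> j = zr A N X"
    and E: "conflation A C M E X i p" and G: "conflation A C K G X k r" and c: "c \<in> Hom A N K"
    and "ext_push A (c \<cdot> a) E i p G k r"
  shows "ext_push A c F j q G k r"
proof -
  note D = pushoutD[OF P] and ED = conflationD[OF E] and GD = conflationD[OF G]
  obtain \<psi> where \<psi>: "\<psi> \<in> Hom A E G" "\<psi> \<cdot> i = k \<cdot> (c \<cdot> a)" "r \<cdot> \<psi> = p"
    using assms(8) by (rule ext_pushE)
  have kc: "k \<cdot> c \<in> Hom A N G" using c D GD by simp
  have "\<psi> \<cdot> i = (k \<cdot> c) \<cdot> a" using comp_assoc[OF D(6) c GD(7)] \<psi> D GD by simp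
  then obtain h where h: "h \<in> Hom A F G" "h \<cdot> b = \<psi>" "h \<cdot> j = k \<cdot> c"
    using pushout_factor[OF P GD(5) \<psi>(1) kc] by blast
  have "r \<cdot> h = q"
  proof (rule pushout_cancel[OF P ED(6)])
    show "r \<cdot> h \<in> Hom A F X" using h D GD by simp
    show "(r \<cdot> h) \<cdot> b = q \<cdot> b" using comp_assoc[OF D(7) h(1) GD(8)] h \<psi> q D GD by simp
    show "(r \<cdot> h) \<cdot> j = q \<cdot> j"
      using comp_assoc[OF D(8) h(1) GD(8)] comp_assoc[OF c GD(7,8), symmetric] h q c D GD by simp
  qed (rule q(1))
  then show ?thesis unfolding ext_push_def using h by blast
qed

lemma ext_push_exists:
  assumes E: "conflation A C M E X i p" and a: "a \<in> Hom A M N" and N: "N \<in> C"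
  shows "\<exists>F j q. conflation A C N F X j q \<and> ext_push A a E i p F j q \<and>
           (\<forall>K G k r c. conflation A C K G X k r \<and> c \<in> Hom A N K \<and> ext_push A (c \<cdot> a) E i p G k r
              \<longrightarrow> ext_push A c F j q G k r)"
proof -
  note ED = conflationD[OF E]
  obtain F b j where P: "is_pushout M E N F i a b j" and j: "is_mono A N F j"
    using pushout_of_mono_exists[OF kernel_is_mono[OF ED(10)] a ED(4,5)] N subcategory_Ob by blast
  note D = pushoutD[OF P]
  obtain q where q: "is_cokernel A N F X j q" "q \<cdot> b = p" using pushout_cokernel[OF P ED(11)] by blast
  have "short_exact A N F X j q"
    unfolding short_exact_def using mono_is_kernel_of_cokernel[OF j q(1)] q(1) by blast
  then have F: "conflation A C N F X j q"
    using ext_closed ED N unfolding conflation_def ext_closed_additive_def by blast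
  have "ext_push A a E i p F j q" unfolding ext_push_def using D q by blast
  moreover note ext_push_through_pushout[OF P _ q(2) _ E] cokernelD[OF q(1)]
  ultimately show ?thesis using F by blast
qed

lemma yoneda_equiv_refl: "conflation A C M E X i p \<Longrightarrow> yoneda_equiv A E X i p E i p"
  using conflationD[of M E X i p] unfolding yoneda_equiv_def by (intro bexI[of _ "idm A E"]) auto

lemma proj_obj_lift:
  "proj_obj A C P \<Longrightarrow> conflation A C X E Y i p \<Longrightarrow> g \<in> Hom A P Y \<Longrightarrow> \<exists>h\<in>Hom A P E. p \<cdot> h = g"
  unfolding proj_obj_def by blast

lemma inj_obj_extend:
  "inj_obj A C I \<Longrightarrow> conflation A C X E Y i p \<Longrightarrow> g \<in> Hom A X I \<Longrightarrow> \<exists>h\<in>Hom A E I. h \<cdot> i = g"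
  unfolding inj_obj_def by blast

lemma proj_obj_Ob: "proj_obj A C P \<Longrightarrow> P \<in> Ob A"
  unfolding proj_obj_def using subcategory_Ob by blast

lemma factors_through_proj_Hom:
  assumes "factors_through_proj A C M N d" "M \<in> Ob A" "N \<in> Ob A"
  shows "d \<in> Hom A M N"
  using assms proj_obj_Ob unfolding factors_through_proj_def by auto

lemma factors_through_proj_comp:
  assumes "factors_through_proj A C N K e" and f: "f \<in> Hom A M N"
    and Ob: "M \<in> Ob A" "N \<in> Ob A" "K \<in> Ob A"
  shows "factors_through_proj A C M K (e \<cdot> f)"
proof -
  obtain P a b where P: "proj_obj A C P" and a: "a \<in> Hom A N P" and b: "b \<in> Hom A P K"
    and e: "e = b \<cdot> a"
    using assms(1) unfolding factors_through_proj_def by blast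
  have "e \<cdot> f = b \<cdot> (a \<cdot> f)" using comp_assoc[OF f a b] e proj_obj_Ob[OF P] Ob by simp
  moreover have "a \<cdot> f \<in> Hom A M P" using f a proj_obj_Ob[OF P] Ob by simp
  ultimately show ?thesis unfolding factors_through_proj_def using P b by blast
qed

lemma proj_obj_if_idm_factors:
  assumes E: "E \<in> C" and P: "proj_obj A C P" and P': "proj_obj A C P'"
    and a: "a \<in> Hom A P E" "b \<in> Hom A E P" and a': "a' \<in> Hom A P' E" "b' \<in> Hom A E P'"
    and idm: "idm A E = a \<cdot> b \<oplus> a' \<cdot> b'"
  shows "proj_obj A C E"
  unfolding proj_obj_def
proof (intro conjI allI impI)
  fix X F Y i p g assume "conflation A C X F Y i p \<and> g \<in> Hom A E Y"
  then have c: "conflation A C X F Y i p" and g: "g \<in> Hom A E Y" by auto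
  note FD = conflationD[OF c]
  have Ob: "E \<in> Ob A" "P \<in> Ob A" "P' \<in> Ob A" using E P P' proj_obj_Ob subcategory_Ob by blast+
  obtain h where h: "h \<in> Hom A P F" "p \<cdot> h = g \<cdot> a"
    using proj_obj_lift[OF P c] g a Ob FD by auto
  obtain h' where h': "h' \<in> Hom A P' F" "p \<cdot> h' = g \<cdot> a'"
    using proj_obj_lift[OF P' c] g a' Ob FD by auto
  have hb: "h \<cdot> b \<in> Hom A E F" and hb': "h' \<cdot> b' \<in> Hom A E F" using h h' a a' Ob FD by simp_all
  have "p \<cdot> (h \<cdot> b \<oplus> h' \<cdot> b') = (g \<cdot> a) \<cdot> b \<oplus> (g \<cdot> a') \<cdot> b'"
    using comp_add_right[OF hb hb' FD(8)] comp_assoc[OF a(2) h(1) FD(8), symmetric]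
      comp_assoc[OF a'(2) h'(1) FD(8), symmetric] h h' Ob FD by simp
  also have "\<dots> = g \<cdot> (a \<cdot> b \<oplus> a' \<cdot> b')"
    using comp_add_right[of "a \<cdot> b" E E "a' \<cdot> b'" g Y] comp_assoc[OF a(2) a(1) g]
      comp_assoc[OF a'(2) a'(1) g] a a' g Ob FD by simp
  also have "\<dots> = g" using idm[symmetric] g Ob FD by simp
  finally show "\<exists>h\<in>Hom A E F. p \<cdot> h = g" using hb hb' Ob FD by auto
qed (rule E)

lemma ext_push_kernel_factor:
  assumes E: "conflation A C M E Z i p" and J: "conflation A C N J Z j q"
    and f: "f \<in> Hom A M N" and \<phi>: "\<phi> \<in> Hom A E J" "\<phi> \<cdot> i = j \<cdot> f" "q \<cdot> \<phi> = p"
    and T: "is_biproduct A N E T j1 j2 q1 q2"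
    and W: "W \<in> Ob A" and x: "x \<in> Hom A W T" "(j \<cdot> q1 \<oplus> \<phi> \<cdot> q2) \<cdot> x = zr A W J"
  shows "\<exists>h\<in>Hom A W M. (j1 \<cdot> f \<oplus> j2 \<cdot> neg A i) \<cdot> h = x"
proof -
  note ED = conflationD[OF E] and JD = conflationD[OF J] and TD = biproductD[OF T]
  have q1x: "q1 \<cdot> x \<in> Hom A W N" and q2x: "q2 \<cdot> x \<in> Hom A W E" using x TD W by simp_all
  have x_eq: "j \<cdot> (q1 \<cdot> x) \<oplus> \<phi> \<cdot> (q2 \<cdot> x) = zr A W J"
    using biproduct_copair_comp[OF T JD(7) \<phi>(1) x(1) W JD(5)] x(2) by simp
  have "p \<cdot> (q2 \<cdot> x) = q \<cdot> (j \<cdot> (q1 \<cdot> x) \<oplus> \<phi> \<cdot> (q2 \<cdot> x))"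
    using comp_add_right[of "j \<cdot> (q1 \<cdot> x)" W J "\<phi> \<cdot> (q2 \<cdot> x)" q Z]
      comp_assoc[OF q1x JD(7) JD(8), symmetric] comp_assoc[OF q2x \<phi>(1) JD(8), symmetric]
      q1x q2x \<phi> JD ED W by simp
  then have "p \<cdot> (q2 \<cdot> x) = zr A W Z" using x_eq JD W by simp
  then obtain m where m: "m \<in> Hom A W M" "i \<cdot> m = q2 \<cdot> x"
    using kernel_factor[OF ED(10) q2x W] by blast
  have fm: "f \<cdot> m \<in> Hom A W N" using f m ED JD W by simp
  have "j \<cdot> (q1 \<cdot> x \<oplus> f \<cdot> m) = j \<cdot> zr A W N"
    using x_eq comp_add_right[OF q1x fm JD(7)] comp_assoc[OF m(1) f JD(7), symmetric]
      comp_assoc[OF m(1) ED(7) \<phi>(1)] m \<phi> ED JD W by simp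
  then have "q1 \<cdot> x \<oplus> f \<cdot> m = zr A W N"
    using kernel_cancel[OF JD(10) add_closed[OF q1x fm] zr_closed W] JD W by simp
  then have q1x_eq: "q1 \<cdot> x = f \<cdot> neg A m"
    using neg_unique[OF fm q1x] add_commute[OF q1x fm] m f ED JD W by simp
  have nm: "neg A m \<in> Hom A W M" and im: "i \<cdot> m \<in> Hom A W E" using m(1) ED W by simp_all
  define \<mu> where "\<mu> = j1 \<cdot> f \<oplus> j2 \<cdot> neg A i"
  have \<mu>: "\<mu> \<in> Hom A M T" "q1 \<cdot> \<mu> = f" "q2 \<cdot> \<mu> = neg A i"
    unfolding \<mu>_def using biproduct_pair[OF T f neg_closed[OF ED(7)] ED(4)] ED by auto
  have "\<mu> \<cdot> neg A m = x"
  proof (rule biproduct_eq_in[OF T _ x(1) W])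
    show "\<mu> \<cdot> neg A m \<in> Hom A W T" using \<mu> nm ED TD W by simp
    show "q1 \<cdot> (\<mu> \<cdot> neg A m) = q1 \<cdot> x" "q2 \<cdot> (\<mu> \<cdot> neg A m) = q2 \<cdot> x"
      using comp_assoc[OF nm \<mu>(1) TD(6), symmetric] comp_assoc[OF nm \<mu>(1) TD(7), symmetric]
        q1x_eq \<mu> m nm im ED TD W by simp_all
  qed
  then show ?thesis unfolding \<mu>_def using nm by blast
qed

text \<open>The square of a morphism of conflations \<open>(f, \<phi>, id)\<close> is a pullback.\<close>
lemma ext_push_kernel:
  assumes E: "conflation A C M E Z i p" and J: "conflation A C N J Z j q"
    and f: "f \<in> Hom A M N" and \<phi>: "\<phi> \<in> Hom A E J" "\<phi> \<cdot> i = j \<cdot> f" "q \<cdot> \<phi> = p"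
    and T: "is_biproduct A N E T j1 j2 q1 q2"
  shows "is_kernel A M T J (j1 \<cdot> f \<oplus> j2 \<cdot> neg A i) (j \<cdot> q1 \<oplus> \<phi> \<cdot> q2)"
proof -
  note ED = conflationD[OF E] and JD = conflationD[OF J] and TD = biproductD[OF T]
  define \<mu> where "\<mu> = j1 \<cdot> f \<oplus> j2 \<cdot> neg A i"
  have \<mu>: "\<mu> \<in> Hom A M T" "q1 \<cdot> \<mu> = f" "q2 \<cdot> \<mu> = neg A i"
    unfolding \<mu>_def using biproduct_pair[OF T f neg_closed[OF ED(7)] ED(4)] ED by auto
  note \<kappa> = biproduct_copair[OF T JD(7) \<phi>(1) JD(5)]
  have "(j \<cdot> q1 \<oplus> \<phi> \<cdot> q2) \<cdot> \<mu> = zr A M J"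
    using biproduct_copair_comp[OF T JD(7) \<phi>(1) \<mu>(1) ED(4) JD(5)] \<mu> \<phi> f ED JD by simp
  moreover have "is_mono A M T \<mu>"
    unfolding is_mono_def
  proof (intro conjI ballI impI)
    fix W a b assume W: "W \<in> Ob A" and ab: "a \<in> Hom A W M" "b \<in> Hom A W M" "\<mu> \<cdot> a = \<mu> \<cdot> b"
    have "neg A (i \<cdot> a) = neg A (i \<cdot> b)"
      using ab comp_assoc[OF ab(1) \<mu>(1) TD(7)] comp_assoc[OF ab(2) \<mu>(1) TD(7)] \<mu> ED TD W by simp
    then have "i \<cdot> a = i \<cdot> b" using ab ED W by (metis comp_closed neg_neg)
    then show "a = b" using kernel_cancel[OF ED(10) ab(1,2) W] by blast
  qed (rule \<mu>(1))
  ultimately show ?thesis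
    unfolding \<mu>_def using kernelI \<kappa>(1) ext_push_kernel_factor[OF E J f \<phi> T] ED JD TD by blast
qed

end

section \<open>Frobenius categories\<close>

locale frobenius_subcategory = exact_subcategory +
  assumes frobenius: "frobenius A C"
begin

lemma proj_obj_iff_inj_obj: "proj_obj A C P \<longleftrightarrow> inj_obj A C P"
  using frobenius unfolding frobenius_def by blast

lemma enough_proj_injectives: "X \<in> C \<Longrightarrow> \<exists>I Y i p. conflation A C X I Y i p \<and> proj_obj A C I"
  using frobenius unfolding frobenius_def by blast

lemma factors_through_proj_extend:
  assumes "factors_through_proj A C M N d" and N: "N \<in> Ob A" and E: "conflation A C M E X i p"
  shows "\<exists>u\<in>Hom A E N. d = u \<cdot> i"
proof -
  note ED = conflationD[OF E]
  obtain P a b where P: "proj_obj A C P" and a: "a \<in> Hom A M P" and b: "b \<in> Hom A P N"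
    and d: "d = b \<cdot> a"
    using assms(1) unfolding factors_through_proj_def by blast
  have PO: "P \<in> Ob A" using proj_obj_Ob[OF P] .
  obtain a' where a': "a' \<in> Hom A E P" "a' \<cdot> i = a"
    using inj_obj_extend[OF P[unfolded proj_obj_iff_inj_obj] E a] by blast
  have "d = (b \<cdot> a') \<cdot> i" using comp_assoc[OF ED(7) a'(1) b] a' d PO N ED by simp
  moreover have "b \<cdot> a' \<in> Hom A E N" using a' b PO N ED by simp
  ultimately show ?thesis by blast
qed

lemma ext_phantom0_iff_factors_through_proj:
  assumes M: "M \<in> C" and N: "N \<in> C" and f: "f \<in> Hom A M N"
  shows "ext_phantom0 A C M N f \<longleftrightarrow> factors_through_proj A C M N f"
proof
  assume phantom: "ext_phantom0 A C M N f"
  have Ob: "M \<in> Ob A" "N \<in> Ob A" using M N subcategory_Ob by blast+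
  obtain J Y i p where J: "conflation A C M J Y i p" and JP: "proj_obj A C J"
    using enough_proj_injectives[OF M] by blast
  obtain F j q where F: "conflation A C N F Y j q" and push: "ext_push A f J i p F j q"
    using ext_push_exists[OF J f N] by blast
  have "split_conf A F Y q"
    using phantom J F push conflationD[OF J] unfolding ext_phantom0_def by blast
  then have "ext_push A (zr A M N) J i p F j q" using split_conf_iff_ext_push_zr[OF J F] by blast
  then obtain u where u: "u \<in> Hom A J N" "zr A M N \<oplus> u \<cdot> i = f"
    using ext_push_diff[OF J F zr_closed f _ push] Ob by blast
  then show "factors_through_proj A C M N f"
    unfolding factors_through_proj_def using JP conflationD[OF J] Ob by auto
next
  assume fp: "factors_through_proj A C M N f"
  show "ext_phantom0 A C M N f" unfolding ext_phantom0_def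
  proof (intro ballI allI impI, elim conjE)
    fix X E i p F j q
    assume E: "conflation A C M E X i p" and F: "conflation A C N F X j q"
      and push: "ext_push A f E i p F j q"
    note ED = conflationD[OF E] and FD = conflationD[OF F]
    obtain u where u: "u \<in> Hom A E N" "f = u \<cdot> i"
      using factors_through_proj_extend[OF fp FD(4) E] by blast
    have "ext_push A (f \<oplus> neg A u \<cdot> i) E i p F j q"
      by (rule ext_push_add[OF E F f _ push]) (use u ED FD in simp)
    moreover have "f \<oplus> neg A u \<cdot> i = zr A M N" using u ED FD by simp
    ultimately have "ext_push A (zr A M N) E i p F j q" by metis
    then show "split_conf A F X q" using split_conf_iff_ext_push_zr[OF E F] by blast
  qed
qed

definition stably_inverse where
  "stably_inverse M N f g \<longleftrightarrow>
     (\<exists>d. factors_through_proj A C M M d \<and> g \<cdot> f \<oplus> d = idm A M) \<and>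
     (\<exists>e. factors_through_proj A C N N e \<and> f \<cdot> g \<oplus> e = idm A N)"

lemma ext_push_surjective_if_stable_right_inverse:
  assumes M: "M \<in> C" and f: "f \<in> Hom A M N" and g: "g \<in> Hom A N M"
    and e: "factors_through_proj A C N N e" "f \<cdot> g \<oplus> e = idm A N"
    and F: "conflation A C N F X j q"
  shows "\<exists>E i p. conflation A C M E X i p \<and> ext_push A f E i p F j q"
proof -
  note FD = conflationD[OF F]
  have MO: "M \<in> Ob A" using M subcategory_Ob by blast
  obtain E i p where E: "conflation A C M E X i p"
    and universal: "\<forall>K G k r c. conflation A C K G X k r \<and> c \<in> Hom A M K \<and>
                      ext_push A (c \<cdot> g) F j q G k r \<longrightarrow> ext_push A c E i p G k r"
    using ext_push_exists[OF F g M] by blast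
  obtain v where v: "v \<in> Hom A F N" "e = v \<cdot> j"
    using factors_through_proj_extend[OF e(1) FD(4) F] by blast
  have "ext_push A (idm A N) F j q F j q"
    using yoneda_equiv_refl[OF F] yoneda_equiv_iff_ext_push_idm[OF F F] by blast
  then have "ext_push A (idm A N \<oplus> neg A v \<cdot> j) F j q F j q"
    by (rule ext_push_add[OF F F idm_closed[OF FD(4)] neg_closed[OF v(1) FD(5,4)]])
  moreover have "idm A N \<oplus> neg A v \<cdot> j = f \<cdot> g"
    using add_eq_imp_eq_sub[of "f \<cdot> g" N N e, OF _ _ _ _ e(2)] v f g MO FD by simp
  ultimately have "ext_push A (f \<cdot> g) F j q F j q" by simp
  then show ?thesis using universal F f E by blast
qed

lemma ext_push_injective_if_stable_left_inverse:
  assumes M: "M \<in> C" and f: "f \<in> Hom A M N" and g: "g \<in> Hom A N M"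
    and d: "factors_through_proj A C M M d" "g \<cdot> f \<oplus> d = idm A M"
    and E1: "conflation A C M E1 X i1 p1" and E2: "conflation A C M E2 X i2 p2"
    and F1: "conflation A C N F1 X j1 q1" and F2: "conflation A C N F2 X j2 q2"
    and push1: "ext_push A f E1 i1 p1 F1 j1 q1" and push2: "ext_push A f E2 i2 p2 F2 j2 q2"
    and "yoneda_equiv A F1 X j1 q1 F2 j2 q2"
  shows "yoneda_equiv A E1 X i1 p1 E2 i2 p2"
proof -
  note FD = conflationD[OF F1]
  have MO: "M \<in> Ob A" using M subcategory_Ob by blast
  obtain G k r where G: "conflation A C M G X k r" and pushG: "ext_push A g F2 j2 q2 G k r"
    using ext_push_exists[OF F2 g M] by blast
  have "ext_push A (idm A N \<cdot> f) E1 i1 p1 F2 j2 q2"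
    using ext_push_comp[OF E1 F1 F2 f idm_closed[OF FD(4)] push1] assms(12)
      yoneda_equiv_iff_ext_push_idm[OF F1 F2] by blast
  then have "ext_push A f E1 i1 p1 F2 j2 q2" using f MO FD by simp
  then have push1G: "ext_push A (g \<cdot> f) E1 i1 p1 G k r" using ext_push_comp[OF E1 F2 G f g _ pushG] by blast
  have push2G: "ext_push A (g \<cdot> f) E2 i2 p2 G k r" using ext_push_comp[OF E2 F2 G f g push2 pushG] .
  have equiv_G: "yoneda_equiv A E X i p G k r"
    if E: "conflation A C M E X i p" and push: "ext_push A (g \<cdot> f) E i p G k r" for E i p
  proof -
    obtain u where u: "u \<in> Hom A E M" "d = u \<cdot> i"
      using factors_through_proj_extend[OF d(1) MO E] by blast
    have "ext_push A (g \<cdot> f \<oplus> u \<cdot> i) E i p G k r"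
      using ext_push_add[OF E G _ u(1) push] f g MO FD by simp
    then show ?thesis using d(2) u(2) yoneda_equiv_iff_ext_push_idm[OF E G] by simp
  qed
  show ?thesis
    using yoneda_equiv_trans[OF E1 G E2 equiv_G[OF E1 push1G]
        yoneda_equiv_sym[OF E2 G equiv_G[OF E2 push2G]]] .
qed

lemma ext_invertible0_if_stably_inverse:
  assumes M: "M \<in> C" and f: "f \<in> Hom A M N" and g: "g \<in> Hom A N M"
    and "stably_inverse M N f g"
  shows "ext_invertible0 A C M N f"
proof -
  obtain d e where d: "factors_through_proj A C M M d" "g \<cdot> f \<oplus> d = idm A M"
    and e: "factors_through_proj A C N N e" "f \<cdot> g \<oplus> e = idm A N"
    using assms(4) unfolding stably_inverse_def by blast
  show ?thesis
    unfolding ext_invertible0_def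
    using ext_push_surjective_if_stable_right_inverse[OF M f g e]
      ext_push_injective_if_stable_left_inverse[OF M f g d] by blast
qed

lemma stable_right_inverse_if_push_to_proj:
  assumes E: "conflation A C M E Z i p" and J: "conflation A C N J Z j q" and JP: "proj_obj A C J"
    and f: "f \<in> Hom A M N" and push: "ext_push A f E i p J j q"
  shows "\<exists>g\<in>Hom A N M. ext_push A g J j q E i p \<and>
           (\<exists>e. factors_through_proj A C N N e \<and> f \<cdot> g \<oplus> e = idm A N)"
proof -
  note ED = conflationD[OF E] and JD = conflationD[OF J]
  obtain \<theta> where \<theta>: "\<theta> \<in> Hom A J E" "p \<cdot> \<theta> = q" using proj_obj_lift[OF JP E JD(8)] by blast
  have "p \<cdot> (\<theta> \<cdot> j) = zr A N Z" using comp_assoc[OF JD(7) \<theta>(1) ED(8), symmetric] \<theta> JD ED by simp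
  then obtain g where g: "g \<in> Hom A N M" "i \<cdot> g = \<theta> \<cdot> j"
    using kernel_factor[OF ED(10) _ JD(4)] \<theta> JD ED by (metis comp_closed)
  have push_g: "ext_push A g J j q E i p" unfolding ext_push_def using \<theta> g by auto
  then have "ext_push A (f \<cdot> g) J j q J j q" using ext_push_comp[OF J E J g(1) f _ push] by blast
  moreover have "ext_push A (idm A N) J j q J j q"
    using yoneda_equiv_refl[OF J] yoneda_equiv_iff_ext_push_idm[OF J J] by blast
  ultimately obtain t where t: "t \<in> Hom A J N" "f \<cdot> g \<oplus> t \<cdot> j = idm A N"
    using ext_push_diff[OF J J _ idm_closed] f g JD ED by (metis comp_closed)
  moreover have "factors_through_proj A C N N (t \<cdot> j)"
    unfolding factors_through_proj_def using JP t JD by blast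
  ultimately show ?thesis using g(1) push_g by blast
qed

lemma stable_left_inverse_if_ext_invertible0:
  assumes inv: "ext_invertible0 A C M N f" and M: "M \<in> C" and N: "N \<in> C"
    and f: "f \<in> Hom A M N" and g: "g \<in> Hom A N M"
    and e: "factors_through_proj A C N N e" "f \<cdot> g \<oplus> e = idm A N"
  shows "\<exists>d. factors_through_proj A C M M d \<and> g \<cdot> f \<oplus> d = idm A M"
proof -
  have Ob: "M \<in> Ob A" "N \<in> Ob A" using M N subcategory_Ob by blast+
  have gf: "g \<cdot> f \<in> Hom A M M" using f g Ob by simp
  obtain I Y i p where I: "conflation A C M I Y i p" and IP: "proj_obj A C I"
    using enough_proj_injectives[OF M] by blast
  note ID = conflationD[OF I]
  obtain E k r where E: "conflation A C M E Y k r" and pushE: "ext_push A (g \<cdot> f) I i p E k r"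
    using ext_push_exists[OF I gf M] by blast
  obtain F j q where F: "conflation A C N F Y j q" and pushF: "ext_push A f E k r F j q"
    using ext_push_exists[OF E f N] by blast
  obtain v where v: "v \<in> Hom A I N" "e \<cdot> f = v \<cdot> i"
    using factors_through_proj_extend[OF factors_through_proj_comp[OF e(1) f] Ob(2) I] Ob by blast
  have "ext_push A (f \<cdot> (g \<cdot> f) \<oplus> v \<cdot> i) I i p F j q"
    using ext_push_add[OF I F _ v(1) ext_push_comp[OF I E F gf f pushE pushF]] f gf Ob by simp
  moreover have "f \<cdot> (g \<cdot> f) \<oplus> v \<cdot> i = f"
  proof -
    have eh: "e \<in> Hom A N N" using factors_through_proj_Hom[OF e(1)] Ob by blast
    have "f \<cdot> (g \<cdot> f) \<oplus> v \<cdot> i = (f \<cdot> g) \<cdot> f \<oplus> e \<cdot> f"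
      using comp_assoc[OF f g f] v(2) Ob by simp
    also have "\<dots> = (f \<cdot> g \<oplus> e) \<cdot> f" using comp_add_left[OF f _ eh] f g Ob by simp
    finally show ?thesis using e(2) f Ob by simp
  qed
  ultimately have "ext_push A f I i p F j q" by simp
  then have "yoneda_equiv A I Y i p E k r"
    using inv I E F pushF yoneda_equiv_refl[OF F] ID unfolding ext_invertible0_def by blast
  then have "ext_push A (idm A M) I i p E k r" using yoneda_equiv_iff_ext_push_idm[OF I E] by blast
  then obtain u where u: "u \<in> Hom A I M" "g \<cdot> f \<oplus> u \<cdot> i = idm A M"
    using ext_push_diff[OF I E gf idm_closed pushE] Ob by blast
  moreover have "factors_through_proj A C M M (u \<cdot> i)"
    unfolding factors_through_proj_def using IP u ID by blast
  ultimately show ?thesis by blast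
qed

lemma proj_obj_if_pushes_to_proj:
  assumes E: "conflation A C M E Z i p" and J: "conflation A C N J Z j q" and JP: "proj_obj A C J"
    and f: "f \<in> Hom A M N" and g: "g \<in> Hom A N M"
    and "ext_push A f E i p J j q" "ext_push A g J j q E i p"
    and d: "factors_through_proj A C M M d" "g \<cdot> f \<oplus> d = idm A M"
  shows "proj_obj A C E"
proof -
  note ED = conflationD[OF E] and JD = conflationD[OF J]
  obtain \<phi> where \<phi>: "\<phi> \<in> Hom A E J" "\<phi> \<cdot> i = j \<cdot> f" "q \<cdot> \<phi> = p"
    using assms(6) by (rule ext_pushE)
  obtain \<theta> where \<theta>: "\<theta> \<in> Hom A J E" "\<theta> \<cdot> j = i \<cdot> g" "p \<cdot> \<theta> = q"
    using assms(7) by (rule ext_pushE)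
  obtain P a b where P: "proj_obj A C P" and a: "a \<in> Hom A M P" and b: "b \<in> Hom A P M"
    and d_eq: "d = b \<cdot> a"
    using d(1) unfolding factors_through_proj_def by blast
  have PO: "P \<in> Ob A" using proj_obj_Ob[OF P] .
  obtain a' where a': "a' \<in> Hom A E P" "a' \<cdot> i = a"
    using inj_obj_extend[OF P[unfolded proj_obj_iff_inj_obj] E a] by blast
  \<comment> \<open>\<open>\<theta> \<cdot> \<phi> \<oplus> (i \<cdot> b) \<cdot> a'\<close> fixes \<open>i\<close>, so it differs from \<open>idm A E\<close> by a map factoring
    through \<open>p = q \<cdot> \<phi>\<close>.\<close>
  have \<theta>\<phi>: "\<theta> \<cdot> \<phi> \<in> Hom A E E" and iba: "(i \<cdot> b) \<cdot> a' \<in> Hom A E E"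
    using \<phi> \<theta> a' b PO ED JD by simp_all
  have "(\<theta> \<cdot> \<phi>) \<cdot> i = i \<cdot> (g \<cdot> f)"
    using comp_assoc[OF ED(7) \<phi>(1) \<theta>(1)] comp_assoc[OF f JD(7) \<theta>(1), symmetric]
      comp_assoc[OF f g ED(7)] \<phi> \<theta> f g ED JD by simp
  moreover have "((i \<cdot> b) \<cdot> a') \<cdot> i = i \<cdot> d"
    using comp_assoc[OF ED(7) a'(1), of "i \<cdot> b" E] comp_assoc[OF a b ED(7)] a' d_eq a b PO ED by simp
  moreover have "g \<cdot> f \<in> Hom A M M" "d \<in> Hom A M M"
    using factors_through_proj_Hom[OF d(1)] f g ED JD by simp_all
  ultimately have "(\<theta> \<cdot> \<phi> \<oplus> (i \<cdot> b) \<cdot> a') \<cdot> i = i \<cdot> (g \<cdot> f \<oplus> d)"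
    using comp_add_left[OF ED(7) \<theta>\<phi> iba] comp_add_right[of "g \<cdot> f" M M d i E] ED by simp
  then have "(idm A E \<ominus> (\<theta> \<cdot> \<phi> \<oplus> (i \<cdot> b) \<cdot> a')) \<cdot> i = zr A M E"
    using comp_sub_left[OF ED(7) idm_closed, of "\<theta> \<cdot> \<phi> \<oplus> (i \<cdot> b) \<cdot> a'"] d(2) \<theta>\<phi> iba ED by simp
  then obtain w where w: "w \<in> Hom A Z E" "w \<cdot> p = idm A E \<ominus> (\<theta> \<cdot> \<phi> \<oplus> (i \<cdot> b) \<cdot> a')"
    using cokernel_factor[OF ED(11) _ ED(5)] \<theta>\<phi> iba ED by (metis add_closed idm_closed neg_closed)
  have wq: "w \<cdot> q \<in> Hom A J E" using w JD ED by simp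
  have "idm A E = w \<cdot> p \<oplus> (\<theta> \<cdot> \<phi> \<oplus> (i \<cdot> b) \<cdot> a')"
    using w add_sub_cancel[OF idm_closed add_closed[OF \<theta>\<phi> iba]] ED by simp
  also have "\<dots> = (w \<cdot> q \<oplus> \<theta>) \<cdot> \<phi> \<oplus> (i \<cdot> b) \<cdot> a'"
    using add_assoc[of "w \<cdot> p" E E "\<theta> \<cdot> \<phi>" "(i \<cdot> b) \<cdot> a'"] comp_add_left[OF \<phi>(1) wq \<theta>(1)]
      comp_assoc[OF \<phi>(1) JD(8) w(1)] \<phi> w \<theta>\<phi> iba ED JD by simp
  finally have "idm A E = (w \<cdot> q \<oplus> \<theta>) \<cdot> \<phi> \<oplus> (i \<cdot> b) \<cdot> a'" .
  moreover have "w \<cdot> q \<oplus> \<theta> \<in> Hom A J E" "i \<cdot> b \<in> Hom A P E" using wq \<theta> b PO ED JD by simp_all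
  ultimately show ?thesis using proj_obj_if_idm_factors[OF ED(2) JP P _ \<phi>(1) _ a'(1)] by blast
qed

text \<open>\<open>M \<rightarrow> N \<oplus> E \<rightarrow> J\<close> is left exact and split by the projectivity of \<open>J\<close>.\<close>
lemma iso_matrix_if_push_to_proj:
  assumes E: "conflation A C M E Z i p" and J: "conflation A C N J Z j q" and JP: "proj_obj A C J"
    and f: "f \<in> Hom A M N" and "ext_push A f E i p J j q"
  shows "\<exists>g1\<in>Hom A J N. \<exists>g2\<in>Hom A J E. \<exists>S i1 i2 p1 p2 T j1 j2 q1 q2 h.
           is_biproduct A M J S i1 i2 p1 p2 \<and> is_biproduct A N E T j1 j2 q1 q2 \<and>
           h \<in> Hom A S T \<and> q1 \<cdot> (h \<cdot> i1) = f \<and> q1 \<cdot> (h \<cdot> i2) = g1 \<and>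
           q2 \<cdot> (h \<cdot> i1) = neg A i \<and> q2 \<cdot> (h \<cdot> i2) = g2 \<and> is_iso A S T h"
proof -
  note ED = conflationD[OF E] and JD = conflationD[OF J]
  obtain \<phi> where \<phi>: "\<phi> \<in> Hom A E J" "\<phi> \<cdot> i = j \<cdot> f" "q \<cdot> \<phi> = p"
    using assms(5) by (rule ext_pushE)
  obtain \<theta> where \<theta>: "\<theta> \<in> Hom A J E" "p \<cdot> \<theta> = q" using proj_obj_lift[OF JP E JD(8)] by blast
  have \<phi>\<theta>: "\<phi> \<cdot> \<theta> \<in> Hom A J J" using \<phi> \<theta> JD ED by simp
  have "q \<cdot> (idm A J \<ominus> \<phi> \<cdot> \<theta>) = zr A J Z"
    using comp_sub_right[OF idm_closed \<phi>\<theta> JD(8)] comp_assoc[OF \<theta>(1) \<phi>(1) JD(8), symmetric] \<phi> \<theta> JD ED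
    by simp
  then obtain s where s: "s \<in> Hom A J N" "j \<cdot> s = idm A J \<ominus> \<phi> \<cdot> \<theta>"
    using kernel_factor[OF JD(10) _ JD(5)] \<phi>\<theta> JD by (metis add_closed idm_closed neg_closed)
  obtain S i1 i2 p1 p2 where S: "is_biproduct A M J S i1 i2 p1 p2" using biproduct_exists ED JD by blast
  obtain T j1 j2 q1 q2 where T: "is_biproduct A N E T j1 j2 q1 q2" using biproduct_exists ED JD by blast
  note TD = biproductD[OF T]
  define \<mu> where "\<mu> = j1 \<cdot> f \<oplus> j2 \<cdot> neg A i"
  define \<sigma> where "\<sigma> = j1 \<cdot> s \<oplus> j2 \<cdot> \<theta>"
  define \<kappa> where "\<kappa> = j \<cdot> q1 \<oplus> \<phi> \<cdot> q2"
  have \<mu>: "q1 \<cdot> \<mu> = f" "q2 \<cdot> \<mu> = neg A i"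
    unfolding \<mu>_def using biproduct_pair[OF T f _ ED(4)] ED by simp_all
  have \<sigma>: "\<sigma> \<in> Hom A J T" "q1 \<cdot> \<sigma> = s" "q2 \<cdot> \<sigma> = \<theta>"
    unfolding \<sigma>_def using biproduct_pair[OF T s(1) \<theta>(1) JD(5)] by auto
  have \<kappa>: "\<kappa> \<in> Hom A T J" "\<kappa> \<cdot> j1 = j" "\<kappa> \<cdot> j2 = \<phi>"
    unfolding \<kappa>_def using biproduct_copair[OF T JD(7) \<phi>(1) JD(5)] by auto
  have "\<kappa> \<cdot> \<sigma> = j \<cdot> s \<oplus> \<phi> \<cdot> \<theta>"
    unfolding \<sigma>_def using comp_add_right[of "j1 \<cdot> s" J T "j2 \<cdot> \<theta>" \<kappa> J] comp_assoc[OF s(1) TD(4) \<kappa>(1), symmetric]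
      comp_assoc[OF \<theta>(1) TD(5) \<kappa>(1), symmetric] \<kappa> s \<theta> TD JD by simp
  also have "\<dots> = idm A J" using s add_sub_cancel[OF idm_closed \<phi>\<theta>] JD by simp
  finally obtain \<rho> where "is_biproduct A M J T \<mu> \<sigma> \<rho> \<kappa>"
    using split_kernel_biproduct[OF ext_push_kernel[OF E J f \<phi> T] \<sigma>(1)] unfolding \<mu>_def \<kappa>_def by blast
  then obtain h where h: "h \<in> Hom A S T" "h \<cdot> i1 = \<mu>" "h \<cdot> i2 = \<sigma>" "is_iso A S T h"
    using biproduct_comparison_iso[OF S] by blast
  have "q1 \<cdot> (h \<cdot> i1) = f" "q1 \<cdot> (h \<cdot> i2) = s" "q2 \<cdot> (h \<cdot> i1) = neg A i" "q2 \<cdot> (h \<cdot> i2) = \<theta>"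
    using h \<mu> \<sigma> by simp_all
  then show ?thesis using h s(1) \<theta>(1) S T by blast
qed

lemma ext_invertible0_if_iso_matrix:
  assumes M: "M \<in> C" and f: "f \<in> Hom A M N"
    and P: "proj_obj A C P" and Q: "proj_obj A C Q" and g1: "g1 \<in> Hom A Q N" and l: "l \<in> Hom A M P"
    and S: "is_biproduct A M Q S i1 i2 p1 p2" and T: "is_biproduct A N P T j1 j2 q1 q2"
    and h: "is_iso A S T h" "q1 \<cdot> (h \<cdot> i1) = f" "q1 \<cdot> (h \<cdot> i2) = g1" "q2 \<cdot> (h \<cdot> i1) = l"
  shows "ext_invertible0 A C M N f"
proof -
  obtain g b a where g: "g \<in> Hom A N M" and b: "b \<in> Hom A N Q" and a: "a \<in> Hom A P M"
    and fg: "f \<cdot> g \<oplus> g1 \<cdot> b = idm A N" and gf: "g \<cdot> f \<oplus> a \<cdot> l = idm A M"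
    using iso_matrix_stable_inverse[OF S T h] by blast
  have "stably_inverse M N f g"
    unfolding stably_inverse_def factors_through_proj_def using P Q a b g1 l fg gf by blast
  then show ?thesis using ext_invertible0_if_stably_inverse[OF M f g] by blast
qed

lemma ext_invertible0_iff_iso_matrix:
  assumes M: "M \<in> C" and N: "N \<in> C" and f: "f \<in> Hom A M N"
  shows "ext_invertible0 A C M N f \<longleftrightarrow>
           (\<exists>P Q g1 l g2. proj_obj A C P \<and> proj_obj A C Q \<and>
              g1 \<in> Hom A Q N \<and> l \<in> Hom A M P \<and> g2 \<in> Hom A Q P \<and>
              (\<exists>S i1 i2 p1 p2 T j1 j2 q1 q2 h.
                 is_biproduct A M Q S i1 i2 p1 p2 \<and> is_biproduct A N P T j1 j2 q1 q2 \<and>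
                 h \<in> Hom A S T \<and>
                 q1 \<cdot> (h \<cdot> i1) = f \<and> q1 \<cdot> (h \<cdot> i2) = g1 \<and>
                 q2 \<cdot> (h \<cdot> i1) = l \<and> q2 \<cdot> (h \<cdot> i2) = g2 \<and> is_iso A S T h))"
    (is "?invertible \<longleftrightarrow> ?matrix")
proof
  assume ?matrix
  then show ?invertible
    by (elim exE conjE) (rule ext_invertible0_if_iso_matrix[OF M f]; assumption)
next
  assume inv: ?invertible
  obtain J Z j q where J: "conflation A C N J Z j q" and JP: "proj_obj A C J"
    using enough_proj_injectives[OF N] by blast
  have "\<forall>F j q. conflation A C N F Z j q \<longrightarrow> (\<exists>E i p. conflation A C M E Z i p \<and> ext_push A f E i p F j q)"
    using inv conflationD(3)[OF J] unfolding ext_invertible0_def by blast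
  then obtain E i p where E: "conflation A C M E Z i p" and push: "ext_push A f E i p J j q"
    using J by blast
  obtain g e where g: "g \<in> Hom A N M" "ext_push A g J j q E i p"
    and e: "factors_through_proj A C N N e" "f \<cdot> g \<oplus> e = idm A N"
    using stable_right_inverse_if_push_to_proj[OF E J JP f push] by blast
  obtain d where "factors_through_proj A C M M d" "g \<cdot> f \<oplus> d = idm A M"
    using stable_left_inverse_if_ext_invertible0[OF inv M N f g(1) e] by blast
  then have "proj_obj A C E" using proj_obj_if_pushes_to_proj[OF E J JP f g(1) push g(2)] by blast
  moreover have "neg A i \<in> Hom A M E" using conflationD[OF E] by simp
  ultimately show ?matrix using iso_matrix_if_push_to_proj[OF E J JP f push] JP by blast
qed

end

theorem proposition3p8:
  fixes A :: "('o, 'm) cat" and C :: "'o set"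
    and M N :: 'o and f :: 'm
  assumes "abelian A"
    and "ext_closed_additive A C"
    and "frobenius A C"
    and "M \<in> C" and "N \<in> C" and "f \<in> Hom A M N"
  shows "(ext_phantom0 A C M N f \<longleftrightarrow> factors_through_proj A C M N f) \<and>
         (ext_invertible0 A C M N f \<longleftrightarrow>
           (\<exists>P Q g1 l g2. proj_obj A C P \<and> proj_obj A C Q \<and>
              g1 \<in> Hom A Q N \<and> l \<in> Hom A M P \<and> g2 \<in> Hom A Q P \<and>
              (\<exists>S i1 i2 p1 p2 T j1 j2 q1 q2 h.
                 is_biproduct A M Q S i1 i2 p1 p2 \<and>
                 is_biproduct A N P T j1 j2 q1 q2 \<and>
                 h \<in> Hom A S T \<and>
                 cmp A q1 (cmp A h i1) = f \<and> cmp A q1 (cmp A h i2) = g1 \<and>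
                 cmp A q2 (cmp A h i1) = l \<and> cmp A q2 (cmp A h i2) = g2 \<and>
                 is_iso A S T h)))"
proof -
  interpret frobenius_subcategory A C
    using assms(1-3) by unfold_locales
  show ?thesis
    using ext_phantom0_iff_factors_through_proj[OF assms(4-6)]
      ext_invertible0_iff_iso_matrix[OF assms(4-6)] by simp
qed

end
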